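(* Let $F=(f_1,\dots,f_s)\in K[\mathbf{X}]^s$, $I=\langle F\rangle$, $\mathbf{r}\in\mathbb{Q}^n$ and $\le_m$ a monomial order. Let $(h_1,\dots,h_k)$ be a finite Gröbner basis of the ideal $\langle F^h\rangle_{(\mathbf{r},0)}\subseteq K\{\mathbf{X},t;(\mathbf{r},0)\}$ with respect to $<_{(\mathbf{r},0),m}$, consisting of homogeneous polynomials belonging to $\langle F^h\rangle$. Then $(h_{1,*},\dots,h_{k,*})$ is an $\mathbf{r}$-local Gröbner basis of $I$ with respect to $<_{\mathbf{r},m}$.
   Context: $K$ is a field complete for a discrete valuation $\mathrm{val}$. For $\mathbf{r}\in\mathbb{Q}^n$, $K\{\mathbf{X};\mathbf{r}\}$ is the Tate algebra of series $\sum a_\alpha\mathbf{X}^\alpha$ with $\mathrm{val}(a_\alpha)-\mathbf{r}\cdot\alpha\to+\infty$; $\mathrm{val}_{\mathbf{r}}(a\mathbf{X}^\alpha)=\mathrm{val}(a)-\mathbf{r}\cdot\alpha$. The order $<_{\mathbf{r},m}$ on terms: $a\mathbf{X}^\alpha<_{\mathbf{r},m}b\mathbf{X}^\beta$ iff $\mathrm{val}_{\mathbf{r}}(a\mathbf{X}^\alpha)>\mathrm{val}_{\mathbf{r}}(b\mathbf{X}^\beta)$, or equal and $\mathbf{X}^\alpha<_m\mathbf{X}^\beta$; $\mathrm{LT}$ denotes the maximal term. For an ideal $J$ of a polynomial ring, $J_{\mathbf{r}}$ is the ideal it generates in the Tate algebra. A Gröbner basis of an ideal $J$ of a Tate algebra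 is a subset $G\subseteq J$ such that each nonzero element of $J$ has leading term divisible by the leading term of some element of $G$; an $\mathbf{r}$-local Gröbner basis of a polynomial ideal $I$ is a Gröbner basis of $I_{\mathbf{r}}$ consisting of polynomials of $I$. Homogenization: for $f\in K[\mathbf{X}]$, $f^*=t^{\deg f}f(\mathbf{X}/t)\in K[\mathbf{X},t]$; dehomogenization: $h_*=h(\mathbf{X},1)$. $F^h=(f_1^*,\dots,f_s^* )$ and $\langle F^h\rangle$ is the ideal of $K[\mathbf{X},t]$ it generates. $K\{\mathbf{X},t;(\mathbf{r},0)\}$ is the Tate algebra in $n+1$ variables with log-radius $0$ for $t$, and $\mathrm{val}_{(\mathbf{r},0)}(a\mathbf{X}^\alpha t^u)=\mathrm{val}_{\mathbf{r}}(a\mathbf{X}^\alpha)$. The order $<_{(\mathbf{r},0),m}$: $a\mathbf{X}^\alpha t^u<b\mathbf{X}^\beta t^v$ iff $\mathrm{val}_{\mathbf{r}}(a\mathbf{X}^\alpha)>\mathrm{val}_{\mathbf{r}}(b\mathbf{X}^\beta)$; or these are equal and $|\alpha|+u<|\beta|+v$; or both are equal and $\mathbf{X}^\alpha<_m\mathbf{X}^\beta$. *)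

theory Defs
  imports Complex_Main
begin

(* Monomials in variables X_0, X_1, ... are exponent vectors nat => nat;
   a monomial "in N variables" has support in {0..<N}.
   (Formal) series / polynomials over K are coefficient functions mono => 'a. *)
type_synonym mono = "nat \<Rightarrow> nat"
type_synonym 'a series = "mono \<Rightarrow> 'a"

definition monoN :: "nat \<Rightarrow> mono \<Rightarrow> bool" where
  "monoN N \<alpha> \<longleftrightarrow> (\<forall>i\<ge>N. \<alpha> i = 0)"

definition mdeg :: "nat \<Rightarrow> mono \<Rightarrow> nat" where
  "mdeg N \<alpha> = (\<Sum>i<N. \<alpha> i)"

definition mono_dvd :: "mono \<Rightarrow> mono \<Rightarrow> bool" where
  "mono_dvd \<alpha> \<beta> \<longleftrightarrow> (\<forall>i. \<alpha> i \<le> \<beta> i)"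

definition zero_series :: "'a::zero series" where
  "zero_series = (\<lambda>_. 0)"

definition complete_dvf :: "('a::field \<Rightarrow> int) \<Rightarrow> bool" where
  "complete_dvf val \<longleftrightarrow>
     (\<forall>x y. x \<noteq> 0 \<longrightarrow> y \<noteq> 0 \<longrightarrow> val (x * y) = val x + val y) \<and>
     (\<forall>x y. x \<noteq> 0 \<longrightarrow> y \<noteq> 0 \<longrightarrow> x + y \<noteq> 0 \<longrightarrow> val (x + y) \<ge> min (val x) (val y)) \<and>
     (\<exists>x. x \<noteq> 0 \<and> val x = 1) \<and>
     (\<forall>s :: nat \<Rightarrow> 'a.
        (\<forall>M. \<exists>N. \<forall>p\<ge>N. \<forall>q\<ge>N. s p = s q \<or> val (s p - s q) \<ge> M) \<longrightarrow>
        (\<exists>L. \<forall>M. \<exists>N. \<forall>p\<ge>N. s p = L \<or> val (s p - L) \<ge> M))"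

definition val_r :: "('a \<Rightarrow> int) \<Rightarrow> nat \<Rightarrow> (nat \<Rightarrow> rat) \<Rightarrow> 'a \<Rightarrow> mono \<Rightarrow> rat" where
  "val_r val N r a \<alpha> = of_int (val a) - (\<Sum>i<N. r i * of_nat (\<alpha> i))"

definition tate :: "('a::zero \<Rightarrow> int) \<Rightarrow> nat \<Rightarrow> (nat \<Rightarrow> rat) \<Rightarrow> 'a series \<Rightarrow> bool" where
  "tate val N r f \<longleftrightarrow> (\<forall>\<alpha>. f \<alpha> \<noteq> 0 \<longrightarrow> monoN N \<alpha>) \<and>
     (\<forall>M::rat. finite {\<alpha>. f \<alpha> \<noteq> 0 \<and> val_r val N r (f \<alpha>) \<alpha> \<le> M})"

definition is_poly :: "nat \<Rightarrow> 'a::zero series \<Rightarrow> bool" where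
  "is_poly N f \<longleftrightarrow> (\<forall>\<alpha>. f \<alpha> \<noteq> 0 \<longrightarrow> monoN N \<alpha>) \<and> finite {\<alpha>. f \<alpha> \<noteq> 0}"

definition series_mult :: "'a::comm_ring_1 series \<Rightarrow> 'a series \<Rightarrow> 'a series" where
  "series_mult f g \<gamma> = (\<Sum>\<alpha>\<in>{\<alpha>. \<forall>i. \<alpha> i \<le> \<gamma> i}. f \<alpha> * g (\<lambda>i. \<gamma> i - \<alpha> i))"

definition poly_ideal :: "nat \<Rightarrow> 'a::comm_ring_1 series set \<Rightarrow> 'a series set" where
  "poly_ideal N P = {f. \<exists>(k::nat) g u. (\<forall>i<k. g i \<in> P \<and> is_poly N (u i)) \<and>
                         f = (\<lambda>\<alpha>. \<Sum>i<k. series_mult (u i) (g i) \<alpha>)}"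

definition tate_ideal :: "('a::comm_ring_1 \<Rightarrow> int) \<Rightarrow> nat \<Rightarrow> (nat \<Rightarrow> rat) \<Rightarrow> 'a series set \<Rightarrow> 'a series set" where
  "tate_ideal val N r P = {f. \<exists>(k::nat) g u. (\<forall>i<k. g i \<in> P \<and> tate val N r (u i)) \<and>
                         f = (\<lambda>\<alpha>. \<Sum>i<k. series_mult (u i) (g i) \<alpha>)}"

definition monomial_order :: "nat \<Rightarrow> (mono \<Rightarrow> mono \<Rightarrow> bool) \<Rightarrow> bool" where
  "monomial_order N mless \<longleftrightarrow>
     (\<forall>\<alpha>. monoN N \<alpha> \<longrightarrow> \<not> mless \<alpha> \<alpha>) \<and>
     (\<forall>\<alpha> \<beta> \<gamma>. monoN N \<alpha> \<longrightarrow> monoN N \<beta> \<longrightarrow> monoN N \<gamma> \<longrightarrow> mless \<alpha> \<beta> \<longrightarrow> mless \<beta> \<gamma> \<longrightarrow> mless \<alpha> \<gamma>) \<and>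
     (\<forall>\<alpha> \<beta>. monoN N \<alpha> \<longrightarrow> monoN N \<beta> \<longrightarrow> \<alpha> \<noteq> \<beta> \<longrightarrow> mless \<alpha> \<beta> \<or> mless \<beta> \<alpha>) \<and>
     (\<forall>\<alpha> \<beta> \<gamma>. monoN N \<alpha> \<longrightarrow> monoN N \<beta> \<longrightarrow> monoN N \<gamma> \<longrightarrow> mless \<alpha> \<beta> \<longrightarrow>
        mless (\<lambda>i. \<alpha> i + \<gamma> i) (\<lambda>i. \<beta> i + \<gamma> i)) \<and>
     wf {(\<alpha>, \<beta>). monoN N \<alpha> \<and> monoN N \<beta> \<and> mless \<alpha> \<beta>}"

(* term order <_{r,m}:  term_less a alpha b beta  means  a X^alpha < b X^beta *)
definition ord_rm :: "('a \<Rightarrow> int) \<Rightarrow> nat \<Rightarrow> (nat \<Rightarrow> rat) \<Rightarrow> (mono \<Rightarrow> mono \<Rightarrow> bool)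
                       \<Rightarrow> 'a \<Rightarrow> mono \<Rightarrow> 'a \<Rightarrow> mono \<Rightarrow> bool" where
  "ord_rm val n r mless a \<alpha> b \<beta> \<longleftrightarrow>
     val_r val n r a \<alpha> > val_r val n r b \<beta> \<or>
     (val_r val n r a \<alpha> = val_r val n r b \<beta> \<and> mless \<alpha> \<beta>)"

(* term order <_{(r,0),m} on terms in X_0..X_(n-1), t = X_n *)
definition ord_r0m :: "('a \<Rightarrow> int) \<Rightarrow> nat \<Rightarrow> (nat \<Rightarrow> rat) \<Rightarrow> (mono \<Rightarrow> mono \<Rightarrow> bool)
                       \<Rightarrow> 'a \<Rightarrow> mono \<Rightarrow> 'a \<Rightarrow> mono \<Rightarrow> bool" where
  "ord_r0m val n r mless a \<alpha> b \<beta> \<longleftrightarrow>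
     val_r val n r a \<alpha> > val_r val n r b \<beta> \<or>
     (val_r val n r a \<alpha> = val_r val n r b \<beta> \<and> mdeg (Suc n) \<alpha> < mdeg (Suc n) \<beta>) \<or>
     (val_r val n r a \<alpha> = val_r val n r b \<beta> \<and> mdeg (Suc n) \<alpha> = mdeg (Suc n) \<beta> \<and>
        mless (\<alpha>(n := 0)) (\<beta>(n := 0)))"

definition lm :: "('a::zero \<Rightarrow> mono \<Rightarrow> 'a \<Rightarrow> mono \<Rightarrow> bool) \<Rightarrow> 'a series \<Rightarrow> mono" where
  "lm tless f = (THE \<alpha>. f \<alpha> \<noteq> 0 \<and> (\<forall>\<beta>. f \<beta> \<noteq> 0 \<longrightarrow> \<beta> \<noteq> \<alpha> \<longrightarrow> tless (f \<beta>) \<beta> (f \<alpha>) \<alpha>))"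

definition is_GB :: "('a::zero \<Rightarrow> mono \<Rightarrow> 'a \<Rightarrow> mono \<Rightarrow> bool) \<Rightarrow> 'a series set \<Rightarrow> 'a series set \<Rightarrow> bool" where
  "is_GB tless J G \<longleftrightarrow> G \<subseteq> J \<and>
     (\<forall>f\<in>J. f \<noteq> zero_series \<longrightarrow>
        (\<exists>g\<in>G. g \<noteq> zero_series \<and> mono_dvd (lm tless g) (lm tless f)))"

definition is_local_GB :: "('a::comm_ring_1 \<Rightarrow> int) \<Rightarrow> nat \<Rightarrow> (nat \<Rightarrow> rat) \<Rightarrow> (mono \<Rightarrow> mono \<Rightarrow> bool)
                           \<Rightarrow> 'a series set \<Rightarrow> 'a series set \<Rightarrow> bool" where
  "is_local_GB val n r mless I G \<longleftrightarrow> G \<subseteq> I \<and>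
     is_GB (ord_rm val n r mless) (tate_ideal val n r I) G"

definition pdeg :: "nat \<Rightarrow> 'a::zero series \<Rightarrow> nat" where
  "pdeg N f = Max (mdeg N ` {\<alpha>. f \<alpha> \<noteq> 0})"

definition homogeneous :: "nat \<Rightarrow> 'a::zero series \<Rightarrow> bool" where
  "homogeneous N h \<longleftrightarrow> (\<exists>d. \<forall>\<alpha>. h \<alpha> \<noteq> 0 \<longrightarrow> mdeg N \<alpha> = d)"

(* homogenization f^* = t^(deg f) f(X/t), t = X_n *)
definition homog :: "nat \<Rightarrow> 'a::zero series \<Rightarrow> 'a series" where
  "homog n f \<beta> = (if monoN (Suc n) \<beta> \<and> mdeg (Suc n) \<beta> = pdeg n f then f (\<beta>(n := 0)) else 0)"

(* dehomogenization h_* = h(X,1) *)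
definition dehomog :: "nat \<Rightarrow> 'a::comm_monoid_add series \<Rightarrow> 'a series" where
  "dehomog n h \<alpha> = (if monoN n \<alpha> then (\<Sum>u\<in>{u. h (\<alpha>(n := u)) \<noteq> 0}. h (\<alpha>(n := u))) else 0)"

end

theory Submission
  imports Defs
begin

text \<open>
  Write \<open>f\<close> in the Tate ideal as \<open>\<Sum>\<^sub>i u\<^sub>i g\<^sub>i\<close> with \<open>g\<^sub>i \<in> I\<close>. Dropping the terms of the Tate
  series \<open>u\<^sub>i\<close> above a suitable valuation level turns them into polynomials and does not change the
  leading term of \<open>f\<close>, because every discarded product term has larger valuation than that leading
  term; this gives a polynomial \<open>p \<in> I\<close> with the same leading term as \<open>f\<close>. Homogenizing \<open>p\<close> in a
  large degree \<open>C\<close> gives an element of \<open>\<langle>F\<^sup>h\<rangle>\<close> whose leading term for \<open><\<^sub>(\<^sub>r\<^sub>,\<^sub>0\<^sub>)\<^sub>,\<^sub>m\<close> is that of \<open>f\<close>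
  times a power of \<open>t\<close>: the valuation ignores \<open>t\<close> and all terms have degree \<open>C\<close>. Some \<open>h\<^sub>j\<close> has a
  leading monomial dividing it, and as \<open>h\<^sub>j\<close> is homogeneous, dehomogenization maps its leading
  monomial to that of \<open>h\<^sub>j\<^sub>*\<close>, which therefore divides the leading monomial of \<open>f\<close>.
\<close>

section \<open>Monomials and the Cauchy product\<close>

definition supp :: "'a::zero series \<Rightarrow> mono set" where
  "supp f = {\<alpha>. f \<alpha> \<noteq> 0}"

definition madd :: "mono \<Rightarrow> mono \<Rightarrow> mono" where
  "madd \<alpha> \<beta> = (\<lambda>i. \<alpha> i + \<beta> i)"

definition mminus :: "mono \<Rightarrow> mono \<Rightarrow> mono" where
  "mminus \<gamma> \<alpha> = (\<lambda>i. \<gamma> i - \<alpha> i)"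

definition sumset :: "mono set \<Rightarrow> mono set \<Rightarrow> mono set" where
  "sumset A B = (\<lambda>p. madd (fst p) (snd p)) ` (A \<times> B)"

lemma madd_mminus: "\<forall>i. \<alpha> i \<le> \<gamma> i \<Longrightarrow> madd \<alpha> (mminus \<gamma> \<alpha>) = \<gamma>"
  unfolding madd_def mminus_def by auto

lemma mminus_madd: "mminus (madd \<alpha> \<beta>) \<alpha> = \<beta>"
  unfolding madd_def mminus_def by auto

lemma monoN_madd: "monoN N \<alpha> \<Longrightarrow> monoN N \<beta> \<Longrightarrow> monoN N (madd \<alpha> \<beta>)"
  unfolding monoN_def madd_def by auto

lemma finite_sumset: "finite A \<Longrightarrow> finite B \<Longrightarrow> finite (sumset A B)"
  unfolding sumset_def by auto

lemma monoN_sumset: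
  "\<forall>\<alpha>\<in>A. monoN N \<alpha> \<Longrightarrow> \<forall>\<beta>\<in>B. monoN N \<beta> \<Longrightarrow> \<forall>\<gamma>\<in>sumset A B. monoN N \<gamma>"
  unfolding sumset_def using monoN_madd by auto

lemma is_poly_supp: "is_poly N a \<Longrightarrow> finite (supp a) \<and> (\<forall>\<alpha>\<in>supp a. monoN N \<alpha>)"
  unfolding is_poly_def supp_def by auto

lemma finite_divisors:
  assumes "monoN N \<gamma>"
  shows "finite {\<alpha>. \<forall>i. \<alpha> i \<le> \<gamma> i}"
proof -
  define M where "M = Max (\<gamma> ` {..<N})"
  let ?Lists = "{xs. set xs \<subseteq> {0..M} \<and> length xs = N}"
  have "{\<alpha>. \<forall>i. \<alpha> i \<le> \<gamma> i} \<subseteq> (\<lambda>xs i. if i < N then xs ! i else 0) ` ?Lists"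
  proof
    fix \<alpha> assume "\<alpha> \<in> {\<alpha>. \<forall>i. \<alpha> i \<le> \<gamma> i}"
    then have le: "\<forall>i. \<alpha> i \<le> \<gamma> i" by simp
    have "\<alpha> i = (if i < N then map \<alpha> [0..<N] ! i else 0)" for i
      using le[rule_format, of i] assms by (auto simp: monoN_def)
    then have "\<alpha> = (\<lambda>i. if i < N then map \<alpha> [0..<N] ! i else 0)" ..
    moreover have "\<alpha> i \<le> M" if "i < N" for i
      using le_trans[OF spec[OF le, of i] Max_ge[of "\<gamma> ` {..<N}"]] that unfolding M_def by auto
    then have "map \<alpha> [0..<N] \<in> ?Lists" by auto
    ultimately show "\<alpha> \<in> (\<lambda>xs i. if i < N then xs ! i else 0) ` ?Lists" by blast
  qed
  moreover have "finite ((\<lambda>xs i. if i < N then xs ! i else 0) ` ?Lists)"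
    by (intro finite_imageI finite_lists_length_eq) simp
  ultimately show ?thesis by (rule finite_subset)
qed

lemma series_mult_altdef:
  "series_mult a b \<gamma> = (\<Sum>\<alpha>\<in>{\<alpha>. \<forall>i. \<alpha> i \<le> \<gamma> i}. a \<alpha> * b (mminus \<gamma> \<alpha>))"
  unfolding series_mult_def mminus_def ..

lemma series_mult_nonzeroD:
  assumes "series_mult a b \<gamma> \<noteq> 0"
  obtains \<alpha> where "\<forall>i. \<alpha> i \<le> \<gamma> i" "a \<alpha> \<noteq> 0" "b (mminus \<gamma> \<alpha>) \<noteq> 0"
proof -
  from assms obtain \<alpha> where "\<alpha> \<in> {\<alpha>. \<forall>i. \<alpha> i \<le> \<gamma> i}" "a \<alpha> * b (mminus \<gamma> \<alpha>) \<noteq> 0"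
    unfolding series_mult_altdef by (rule sum.not_neutral_contains_not_neutral)
  then show ?thesis by (intro that) auto
qed

lemma supp_series_mult:
  assumes "supp a \<subseteq> A" "supp b \<subseteq> B"
  shows "supp (series_mult a b) \<subseteq> sumset A B"
proof
  fix \<gamma> assume "\<gamma> \<in> supp (series_mult a b)"
  then have "series_mult a b \<gamma> \<noteq> 0" by (simp add: supp_def)
  then obtain \<alpha> where \<alpha>: "\<forall>i. \<alpha> i \<le> \<gamma> i" "a \<alpha> \<noteq> 0" "b (mminus \<gamma> \<alpha>) \<noteq> 0"
    by (rule series_mult_nonzeroD)
  then have "(\<alpha>, mminus \<gamma> \<alpha>) \<in> A \<times> B" using assms by (auto simp: supp_def)
  then show "\<gamma> \<in> sumset A B" unfolding sumset_def using madd_mminus[OF \<alpha>(1)] by force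
qed

lemma is_poly_series_mult:
  fixes a b :: "'a::comm_ring_1 series"
  assumes "is_poly N a" "is_poly N b"
  shows "is_poly N (series_mult a b)"
proof -
  let ?S = "sumset (supp a) (supp b)"
  have S: "supp (series_mult a b) \<subseteq> ?S" by (rule supp_series_mult) auto
  have "finite ?S" "\<forall>\<gamma>\<in>?S. monoN N \<gamma>"
    using is_poly_supp[OF assms(1)] is_poly_supp[OF assms(2)]
    by (simp add: finite_sumset, intro monoN_sumset) simp_all
  then have "finite (supp (series_mult a b))" "\<forall>\<gamma>\<in>supp (series_mult a b). monoN N \<gamma>"
    using S finite_subset by blast+
  then show ?thesis unfolding is_poly_def supp_def by blast
qed

lemma series_mult_eq_sum_pairs:
  fixes a b :: "'a::comm_ring_1 series"
  assumes "finite A" "finite B" "supp a \<subseteq> A" "supp b \<subseteq> B"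
    "\<forall>\<alpha>\<in>A. monoN N \<alpha>" "\<forall>\<beta>\<in>B. monoN N \<beta>"
  shows "series_mult a b \<gamma> = (\<Sum>p\<in>{p\<in>A\<times>B. madd (fst p) (snd p) = \<gamma>}. a (fst p) * b (snd p))"
proof (cases "\<exists>p\<in>A\<times>B. madd (fst p) (snd p) = \<gamma>")
  case True
  then have "monoN N \<gamma>" using assms(5,6) monoN_madd by (metis mem_Times_iff)
  let ?S = "{\<alpha>. (\<forall>i. \<alpha> i \<le> \<gamma> i) \<and> \<alpha> \<in> A \<and> mminus \<gamma> \<alpha> \<in> B}"
  have "series_mult a b \<gamma> = (\<Sum>\<alpha>\<in>?S. a \<alpha> * b (mminus \<gamma> \<alpha>))"
    unfolding series_mult_altdef
    by (rule sum.mono_neutral_right[OF finite_divisors[OF \<open>monoN N \<gamma>\<close>]])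
       (use assms(3,4) in \<open>auto simp: supp_def\<close>)
  also have "\<dots> = (\<Sum>p\<in>(\<lambda>\<alpha>. (\<alpha>, mminus \<gamma> \<alpha>)) ` ?S. a (fst p) * b (snd p))"
    by (subst sum.reindex) (auto intro: inj_onI)
  also have "(\<lambda>\<alpha>. (\<alpha>, mminus \<gamma> \<alpha>)) ` ?S = {p\<in>A\<times>B. madd (fst p) (snd p) = \<gamma>}"
  proof (rule set_eqI, rule iffI)
    fix q assume "q \<in> {p\<in>A\<times>B. madd (fst p) (snd p) = \<gamma>}"
    moreover obtain x y where "q = (x, y)" by fastforce
    ultimately have "\<forall>i. x i \<le> \<gamma> i" "mminus \<gamma> x = y" "x \<in> A" "y \<in> B"
      using mminus_madd by (auto simp: madd_def)
    then show "q \<in> (\<lambda>\<alpha>. (\<alpha>, mminus \<gamma> \<alpha>)) ` ?S" using \<open>q = (x, y)\<close> by auto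
  qed (auto simp: madd_mminus)
  finally show ?thesis .
next
  case False
  then have E: "{p\<in>A\<times>B. madd (fst p) (snd p) = \<gamma>} = {}" by auto
  have "a \<alpha> * b (mminus \<gamma> \<alpha>) = 0" if "\<forall>i. \<alpha> i \<le> \<gamma> i" for \<alpha>
  proof (rule ccontr)
    assume "a \<alpha> * b (mminus \<gamma> \<alpha>) \<noteq> 0"
    then have "\<alpha> \<in> A" "mminus \<gamma> \<alpha> \<in> B" using assms(3,4) by (auto simp: supp_def)
    then show False using False madd_mminus[OF that] by force
  qed
  then have "series_mult a b \<gamma> = 0" unfolding series_mult_altdef by (intro sum.neutral) blast
  then show ?thesis unfolding E by simp
qed

definition pushforward :: "mono set \<Rightarrow> (mono \<Rightarrow> mono) \<Rightarrow> 'a::comm_monoid_add series \<Rightarrow> 'a series" where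
  "pushforward S \<phi> c \<gamma> = sum c {\<alpha>\<in>S. \<phi> \<alpha> = \<gamma>}"

lemma supp_pushforward: "supp (pushforward S \<phi> c) \<subseteq> \<phi> ` S"
  unfolding supp_def pushforward_def by (auto elim: sum.not_neutral_contains_not_neutral)

lemma pushforward_sum:
  "pushforward A \<phi> (\<lambda>\<beta>. \<Sum>j<k. x j \<beta>) \<gamma> = (\<Sum>j<k. pushforward A \<phi> (x j) \<gamma>)"
  unfolding pushforward_def by (rule sum.swap)

text \<open>Homogenization in a fixed degree and dehomogenization are pushforwards along monomial maps
  that are additive on the supports, so their multiplicativity reduces to this lemma.\<close>

lemma pushforward_series_mult:
  fixes a b :: "'a::comm_ring_1 series"
  assumes fA: "finite A" and fB: "finite B" and sa: "supp a \<subseteq> A" and sb: "supp b \<subseteq> B"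
    and mA: "\<forall>\<alpha>\<in>A. monoN N \<alpha>" and mB: "\<forall>\<beta>\<in>B. monoN N \<beta>"
    and mA': "\<forall>\<alpha>\<in>A. monoN N' (\<phi>1 \<alpha>)" and mB': "\<forall>\<beta>\<in>B. monoN N' (\<phi>2 \<beta>)"
    and additive: "\<forall>\<alpha>\<in>A. \<forall>\<beta>\<in>B. \<phi> (madd \<alpha> \<beta>) = madd (\<phi>1 \<alpha>) (\<phi>2 \<beta>)"
  shows "pushforward (sumset A B) \<phi> (series_mult a b) \<gamma> =
         series_mult (pushforward A \<phi>1 a) (pushforward B \<phi>2 b) \<gamma>"
proof -
  define P where "P = A \<times> B"
  define f where "f p = a (fst p) * b (snd p)" for p
  define g where "g p = madd (fst p) (snd p)" for p
  define h where "h p = (\<phi>1 (fst p), \<phi>2 (snd p))" for p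
  have fP: "finite P" using fA fB P_def by auto
  have "pushforward (sumset A B) \<phi> (series_mult a b) \<gamma> =
        (\<Sum>\<epsilon>\<in>{\<epsilon>\<in>sumset A B. \<phi> \<epsilon> = \<gamma>}. \<Sum>p\<in>{p\<in>P. g p = \<epsilon>}. f p)"
    unfolding pushforward_def
    by (rule sum.cong[OF refl], subst series_mult_eq_sum_pairs[OF fA fB sa sb mA mB])
       (simp add: P_def f_def g_def)
  also have "\<dots> = (\<Sum>\<epsilon>\<in>{\<epsilon>\<in>sumset A B. \<phi> \<epsilon> = \<gamma>}.
                    \<Sum>p\<in>{p\<in>{p\<in>P. \<phi> (g p) = \<gamma>}. g p = \<epsilon>}. f p)"
    by (rule sum.cong[OF refl], rule sum.cong) auto
  also have "\<dots> = (\<Sum>p\<in>{p\<in>P. \<phi> (g p) = \<gamma>}. f p)"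
    by (rule sum.group) (use fP fA fB finite_sumset in \<open>auto simp: sumset_def P_def g_def\<close>)
  also have "{p\<in>P. \<phi> (g p) = \<gamma>} = {p\<in>P. g (h p) = \<gamma>}"
    using additive by (auto simp: P_def g_def h_def)
  finally have lhs: "pushforward (sumset A B) \<phi> (series_mult a b) \<gamma> = (\<Sum>p\<in>{p\<in>P. g (h p) = \<gamma>}. f p)" .
  have "series_mult (pushforward A \<phi>1 a) (pushforward B \<phi>2 b) \<gamma> =
     (\<Sum>q\<in>{q\<in>\<phi>1 ` A \<times> \<phi>2 ` B. g q = \<gamma>}. pushforward A \<phi>1 a (fst q) * pushforward B \<phi>2 b (snd q))"
    by (subst series_mult_eq_sum_pairs[of "\<phi>1 ` A" "\<phi>2 ` B" _ _ N'])
       (use fA fB supp_pushforward[of A \<phi>1 a] supp_pushforward[of B \<phi>2 b] mA' mB' in \<open>auto simp: g_def\<close>)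
  also have "\<dots> = (\<Sum>q\<in>{q\<in>\<phi>1 ` A \<times> \<phi>2 ` B. g q = \<gamma>}. \<Sum>p\<in>{p\<in>{p\<in>P. g (h p) = \<gamma>}. h p = q}. f p)"
  proof (rule sum.cong[OF refl])
    fix q assume q: "q \<in> {q\<in>\<phi>1 ` A \<times> \<phi>2 ` B. g q = \<gamma>}"
    have "pushforward A \<phi>1 a (fst q) * pushforward B \<phi>2 b (snd q) =
          (\<Sum>p\<in>{\<alpha>\<in>A. \<phi>1 \<alpha> = fst q} \<times> {\<beta>\<in>B. \<phi>2 \<beta> = snd q}. f p)"
      unfolding pushforward_def sum_product f_def
      by (subst sum.cartesian_product) (simp add: case_prod_beta')
    also have "{\<alpha>\<in>A. \<phi>1 \<alpha> = fst q} \<times> {\<beta>\<in>B. \<phi>2 \<beta> = snd q} = {p\<in>{p\<in>P. g (h p) = \<gamma>}. h p = q}"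
      using q by (auto simp: P_def h_def)
    finally show "pushforward A \<phi>1 a (fst q) * pushforward B \<phi>2 b (snd q) =
                  (\<Sum>p\<in>{p\<in>{p\<in>P. g (h p) = \<gamma>}. h p = q}. f p)" .
  qed
  also have "\<dots> = (\<Sum>p\<in>{p\<in>P. g (h p) = \<gamma>}. f p)"
    by (rule sum.group) (use fP fA fB in \<open>auto simp: P_def h_def\<close>)
  finally show ?thesis using lhs by simp
qed

section \<open>Homogenization and dehomogenization\<close>

lemma mdeg_Suc: "mdeg (Suc n) \<beta> = mdeg n \<beta> + \<beta> n"
  unfolding mdeg_def by simp

lemma mdeg_fun_upd: "mdeg n (\<beta>(n := x)) = mdeg n \<beta>"
  unfolding mdeg_def by (rule sum.cong) auto

lemma mdeg_madd: "mdeg N (madd \<alpha> \<beta>) = mdeg N \<alpha> + mdeg N \<beta>"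
  unfolding mdeg_def madd_def by (simp add: sum.distrib)

lemma monoN_fun_upd: "monoN n \<alpha> \<Longrightarrow> monoN (Suc n) (\<alpha>(n := x))"
  unfolding monoN_def by auto

lemma monoN_fun_upd_0: "monoN (Suc n) \<beta> \<Longrightarrow> monoN n (\<beta>(n := 0))"
  unfolding monoN_def by auto

lemma fun_upd_monoN_eq: "monoN n \<alpha> \<Longrightarrow> \<alpha>(n := 0) = \<alpha>"
  unfolding monoN_def by fastforce

text \<open>\<open>homog_deg n D f\<close> is \<open>t\<^sup>D f(X/t)\<close>, i.e. \<open>t\<^bsup>D - deg f\<^esup> f\<^sup>*\<close>; terms of \<open>f\<close> of degree
  larger than \<open>D\<close> are dropped, so \<open>D\<close> should bound the degree of \<open>f\<close>.\<close>

definition homog_deg :: "nat \<Rightarrow> nat \<Rightarrow> 'a::zero series \<Rightarrow> 'a series" where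
  "homog_deg n D f \<beta> = (if monoN (Suc n) \<beta> \<and> mdeg (Suc n) \<beta> = D then f (\<beta>(n := 0)) else 0)"

definition lift_deg :: "nat \<Rightarrow> nat \<Rightarrow> mono \<Rightarrow> mono" where
  "lift_deg n D \<alpha> = \<alpha>(n := D - mdeg n \<alpha>)"

lemma homog_eq_homog_deg: "homog n f = homog_deg n (pdeg n f) f"
  by (intro ext) (simp add: homog_def homog_deg_def)

lemma lift_deg_fun_upd_0: "monoN n \<alpha> \<Longrightarrow> (lift_deg n D \<alpha>)(n := 0) = \<alpha>"
  unfolding lift_deg_def by (simp add: fun_upd_monoN_eq)

lemma monoN_lift_deg: "monoN n \<alpha> \<Longrightarrow> monoN (Suc n) (lift_deg n D \<alpha>)"
  unfolding lift_deg_def by (rule monoN_fun_upd)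

lemma mdeg_lift_deg: "mdeg n \<alpha> \<le> D \<Longrightarrow> mdeg (Suc n) (lift_deg n D \<alpha>) = D"
  unfolding lift_deg_def mdeg_Suc mdeg_fun_upd by simp

lemma homog_deg_lift_deg:
  "monoN n \<alpha> \<Longrightarrow> mdeg n \<alpha> \<le> D \<Longrightarrow> homog_deg n D f (lift_deg n D \<alpha>) = f \<alpha>"
  by (simp add: homog_deg_def monoN_lift_deg mdeg_lift_deg lift_deg_fun_upd_0)

lemma homog_deg_nonzeroD:
  assumes "homog_deg n D f \<beta> \<noteq> 0"
  shows "monoN (Suc n) \<beta>" "mdeg (Suc n) \<beta> = D" "f (\<beta>(n := 0)) \<noteq> 0"
    "\<beta> = lift_deg n D (\<beta>(n := 0))"
proof -
  show b: "monoN (Suc n) \<beta>" "mdeg (Suc n) \<beta> = D" "f (\<beta>(n := 0)) \<noteq> 0"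
    using assms by (auto simp: homog_deg_def split: if_splits)
  have "\<beta> n = D - mdeg n \<beta>" using b(2) mdeg_Suc[of n \<beta>] by simp
  then show "\<beta> = lift_deg n D (\<beta>(n := 0))" by (auto simp: lift_deg_def mdeg_fun_upd)
qed

lemma is_poly_homog_deg:
  assumes "is_poly n f"
  shows "is_poly (Suc n) (homog_deg n D f)"
proof -
  have "finite {\<alpha>. f \<alpha> \<noteq> 0}" using assms by (simp add: is_poly_def)
  moreover have "{\<beta>. homog_deg n D f \<beta> \<noteq> 0} \<subseteq> lift_deg n D ` {\<alpha>. f \<alpha> \<noteq> 0}"
    using homog_deg_nonzeroD(3,4) by blast
  ultimately have "finite {\<beta>. homog_deg n D f \<beta> \<noteq> 0}" by (rule finite_surj)
  then show ?thesis unfolding is_poly_def using homog_deg_nonzeroD(1) by blast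
qed

lemma homog_deg_sum:
  "homog_deg n D (\<lambda>\<alpha>. \<Sum>i<k. x i \<alpha>) = (\<lambda>\<beta>. \<Sum>i<k. homog_deg n D (x i) \<beta>)"
proof
  fix \<beta> show "homog_deg n D (\<lambda>\<alpha>. \<Sum>i<k. x i \<alpha>) \<beta> = (\<Sum>i<k. homog_deg n D (x i) \<beta>)"
    by (cases "monoN (Suc n) \<beta> \<and> mdeg (Suc n) \<beta> = D") (auto simp: homog_deg_def)
qed

lemma homog_deg_eq_pushforward:
  assumes "supp a \<subseteq> A" "\<forall>\<alpha>\<in>A. monoN n \<alpha> \<and> mdeg n \<alpha> \<le> D"
  shows "homog_deg n D a = pushforward A (lift_deg n D) a"
proof
  fix \<beta> :: mono
  let ?\<alpha> = "\<beta>(n := 0)"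
  show "homog_deg n D a \<beta> = pushforward A (lift_deg n D) a \<beta>"
  proof (cases "?\<alpha> \<in> A \<and> lift_deg n D ?\<alpha> = \<beta>")
    case True
    then have "{\<alpha>\<in>A. lift_deg n D \<alpha> = \<beta>} = {?\<alpha>}"
      using assms(2) lift_deg_fun_upd_0 by fastforce
    then show ?thesis
      using True assms(2) homog_deg_lift_deg[of n ?\<alpha> D a] by (simp add: pushforward_def)
  next
    case False
    then have E: "{\<alpha>\<in>A. lift_deg n D \<alpha> = \<beta>} = {}"
      using assms(2) lift_deg_fun_upd_0 by fastforce
    have "homog_deg n D a \<beta> = 0"
      using False assms(1) homog_deg_nonzeroD(3,4)[of n D a \<beta>] by (auto simp: supp_def)
    then show ?thesis unfolding pushforward_def E by simp
  qed
qed

lemma homog_deg_series_mult: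
  fixes a b :: "'a::comm_ring_1 series"
  assumes pa: "is_poly n a" and pb: "is_poly n b"
    and da: "\<forall>\<alpha>. a \<alpha> \<noteq> 0 \<longrightarrow> mdeg n \<alpha> \<le> D" and db: "\<forall>\<beta>. b \<beta> \<noteq> 0 \<longrightarrow> mdeg n \<beta> \<le> E"
  shows "homog_deg n (D + E) (series_mult a b) = series_mult (homog_deg n D a) (homog_deg n E b)"
proof
  fix \<gamma>
  let ?A = "supp a" and ?B = "supp b"
  have fA: "finite ?A" and mA: "\<forall>\<alpha>\<in>?A. monoN n \<alpha>" using is_poly_supp[OF pa] by auto
  have fB: "finite ?B" and mB: "\<forall>\<alpha>\<in>?B. monoN n \<alpha>" using is_poly_supp[OF pb] by auto
  have ha: "homog_deg n D a = pushforward ?A (lift_deg n D) a"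
    using mA da by (intro homog_deg_eq_pushforward) (auto simp: supp_def)
  have hb: "homog_deg n E b = pushforward ?B (lift_deg n E) b"
    using mB db by (intro homog_deg_eq_pushforward) (auto simp: supp_def)
  have "\<forall>\<gamma>\<in>sumset ?A ?B. monoN n \<gamma> \<and> mdeg n \<gamma> \<le> D + E"
    using mA mB da db unfolding sumset_def by (auto simp: supp_def mdeg_madd monoN_madd add_mono)
  then have hab: "homog_deg n (D + E) (series_mult a b) =
      pushforward (sumset ?A ?B) (lift_deg n (D + E)) (series_mult a b)"
    by (intro homog_deg_eq_pushforward supp_series_mult) auto
  have additive: "lift_deg n (D + E) (madd \<alpha> \<beta>) = madd (lift_deg n D \<alpha>) (lift_deg n E \<beta>)"
    if "\<alpha> \<in> ?A" "\<beta> \<in> ?B" for \<alpha> \<beta>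
  proof -
    have "mdeg n \<alpha> \<le> D" "mdeg n \<beta> \<le> E" "\<alpha> n = 0" "\<beta> n = 0"
      using that da db mA mB by (auto simp: supp_def monoN_def)
    then show ?thesis by (auto simp: lift_deg_def madd_def mdeg_madd[unfolded madd_def])
  qed
  show "homog_deg n (D + E) (series_mult a b) \<gamma> = series_mult (homog_deg n D a) (homog_deg n E b) \<gamma>"
    unfolding ha hb hab
    by (rule pushforward_series_mult[OF fA fB _ _ mA mB, of _ _ "Suc n"])
       (use additive mA mB monoN_lift_deg in auto)
qed

lemma dehomog_eq_pushforward:
  fixes h :: "'a::comm_monoid_add series"
  assumes fA: "finite A" and sA: "supp h \<subseteq> A" and mA: "\<forall>\<beta>\<in>A. monoN (Suc n) \<beta>"
  shows "dehomog n h = pushforward A (\<lambda>\<beta>. \<beta>(n := 0)) h"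
proof
  fix \<alpha>
  show "dehomog n h \<alpha> = pushforward A (\<lambda>\<beta>. \<beta>(n := 0)) h \<alpha>"
  proof (cases "monoN n \<alpha>")
    case False
    then have E: "{\<beta>\<in>A. \<beta>(n := 0) = \<alpha>} = {}" using mA monoN_fun_upd_0 by blast
    show ?thesis using False unfolding pushforward_def E by (simp add: dehomog_def)
  next
    case True
    let ?U = "{u. h (\<alpha>(n := u)) \<noteq> 0}"
    have inj: "inj_on (\<lambda>u. \<alpha>(n := u)) ?U" by (rule inj_onI) (metis fun_upd_same)
    have im: "(\<lambda>u. \<alpha>(n := u)) ` ?U \<subseteq> {\<beta>\<in>A. \<beta>(n := 0) = \<alpha>}"
      using sA fun_upd_monoN_eq[OF True] by (auto simp: supp_def)
    have "dehomog n h \<alpha> = (\<Sum>\<beta>\<in>(\<lambda>u. \<alpha>(n := u)) ` ?U. h \<beta>)"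
      using True by (simp add: dehomog_def sum.reindex[OF inj])
    also have "\<dots> = (\<Sum>\<beta>\<in>{\<beta>\<in>A. \<beta>(n := 0) = \<alpha>}. h \<beta>)"
    proof (rule sum.mono_neutral_left[OF _ im])
      show "finite {\<beta>\<in>A. \<beta>(n := 0) = \<alpha>}" using fA by simp
      show "\<forall>\<beta>\<in>{\<beta>\<in>A. \<beta>(n := 0) = \<alpha>} - (\<lambda>u. \<alpha>(n := u)) ` ?U. h \<beta> = 0"
      proof (rule ballI, rule ccontr)
        fix \<beta> assume \<beta>: "\<beta> \<in> {\<beta>\<in>A. \<beta>(n := 0) = \<alpha>} - (\<lambda>u. \<alpha>(n := u)) ` ?U" "h \<beta> \<noteq> 0"
        then have "\<beta> = \<alpha>(n := \<beta> n)" by auto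
        then show False using \<beta> by (metis (mono_tags, lifting) DiffD2 image_eqI mem_Collect_eq)
      qed
    qed
    finally show ?thesis by (simp add: pushforward_def)
  qed
qed

lemma dehomog_series_mult:
  fixes a b :: "'a::comm_ring_1 series"
  assumes pa: "is_poly (Suc n) a" and pb: "is_poly (Suc n) b"
  shows "dehomog n (series_mult a b) = series_mult (dehomog n a) (dehomog n b)"
proof
  fix \<gamma>
  let ?A = "supp a" and ?B = "supp b"
  have fA: "finite ?A" and mA: "\<forall>\<alpha>\<in>?A. monoN (Suc n) \<alpha>" using is_poly_supp[OF pa] by auto
  have fB: "finite ?B" and mB: "\<forall>\<alpha>\<in>?B. monoN (Suc n) \<alpha>" using is_poly_supp[OF pb] by auto
  have da: "dehomog n a = pushforward ?A (\<lambda>\<beta>. \<beta>(n := 0)) a"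
    by (rule dehomog_eq_pushforward[OF fA _ mA]) auto
  have db: "dehomog n b = pushforward ?B (\<lambda>\<beta>. \<beta>(n := 0)) b"
    by (rule dehomog_eq_pushforward[OF fB _ mB]) auto
  have dab: "dehomog n (series_mult a b) = pushforward (sumset ?A ?B) (\<lambda>\<beta>. \<beta>(n := 0)) (series_mult a b)"
    by (rule dehomog_eq_pushforward[OF finite_sumset[OF fA fB] supp_series_mult monoN_sumset[OF mA mB]])
       auto
  show "dehomog n (series_mult a b) \<gamma> = series_mult (dehomog n a) (dehomog n b) \<gamma>"
    unfolding da db dab
    by (rule pushforward_series_mult[OF fA fB _ _ mA mB, of _ _ n])
       (use mA mB monoN_fun_upd_0 in \<open>auto simp: madd_def\<close>)
qed

lemma dehomog_sum:
  fixes x :: "nat \<Rightarrow> 'a::comm_monoid_add series"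
  assumes "\<forall>j<k. is_poly (Suc n) (x j)"
  shows "dehomog n (\<lambda>\<beta>. \<Sum>j<k. x j \<beta>) = (\<lambda>\<alpha>. \<Sum>j<k. dehomog n (x j) \<alpha>)"
proof -
  let ?A = "\<Union>j<k. supp (x j)"
  have fA: "finite ?A" and mA: "\<forall>\<beta>\<in>?A. monoN (Suc n) \<beta>"
    using assms unfolding is_poly_def supp_def by auto
  have "supp (\<lambda>\<beta>. \<Sum>j<k. x j \<beta>) \<subseteq> ?A"
    unfolding supp_def by (auto elim!: sum.not_neutral_contains_not_neutral)
  then have "dehomog n (\<lambda>\<beta>. \<Sum>j<k. x j \<beta>) = pushforward ?A (\<lambda>\<beta>. \<beta>(n := 0)) (\<lambda>\<beta>. \<Sum>j<k. x j \<beta>)"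
    by (rule dehomog_eq_pushforward[OF fA _ mA])
  moreover have "dehomog n (x j) = pushforward ?A (\<lambda>\<beta>. \<beta>(n := 0)) (x j)" if "j < k" for j
    by (rule dehomog_eq_pushforward[OF fA _ mA]) (use that in auto)
  ultimately show ?thesis by (auto simp: pushforward_sum)
qed

lemma is_poly_dehomog:
  fixes w :: "'a::comm_monoid_add series"
  assumes "is_poly (Suc n) w"
  shows "is_poly n (dehomog n w)"
proof -
  have f: "finite (supp w)" and m: "\<forall>\<beta>\<in>supp w. monoN (Suc n) \<beta>" using is_poly_supp[OF assms] by auto
  have "dehomog n w = pushforward (supp w) (\<lambda>\<beta>. \<beta>(n := 0)) w"
    by (rule dehomog_eq_pushforward[OF f _ m]) auto
  then have "supp (dehomog n w) \<subseteq> (\<lambda>\<beta>. \<beta>(n := 0)) ` supp w" using supp_pushforward by metis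
  with f have "finite (supp (dehomog n w))" by (rule finite_surj)
  then show ?thesis unfolding is_poly_def supp_def by (auto simp: dehomog_def)
qed

lemma dehomog_homogeneous:
  assumes "\<forall>\<beta>. h \<beta> \<noteq> 0 \<longrightarrow> mdeg (Suc n) \<beta> = d" "monoN n \<alpha>"
  shows "dehomog n h \<alpha> = h (lift_deg n d \<alpha>)"
proof -
  have sub: "{u. h (\<alpha>(n := u)) \<noteq> 0} \<subseteq> {d - mdeg n \<alpha>}"
    using assms(1) by (auto simp: mdeg_Suc mdeg_fun_upd)
  have "dehomog n h \<alpha> = (\<Sum>u\<in>{u. h (\<alpha>(n := u)) \<noteq> 0}. h (\<alpha>(n := u)))"
    using assms(2) by (simp add: dehomog_def)
  also have "\<dots> = (\<Sum>u\<in>{d - mdeg n \<alpha>}. h (\<alpha>(n := u)))"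
    by (rule sum.mono_neutral_left[OF _ sub]) auto
  finally show ?thesis by (simp add: lift_deg_def)
qed

lemma dehomog_homog_deg:
  assumes "is_poly n f" "\<forall>\<alpha>. f \<alpha> \<noteq> 0 \<longrightarrow> mdeg n \<alpha> \<le> D"
  shows "dehomog n (homog_deg n D f) = f"
proof
  fix \<alpha>
  show "dehomog n (homog_deg n D f) \<alpha> = f \<alpha>"
  proof (cases "monoN n \<alpha>")
    case False
    then show ?thesis using assms(1) by (auto simp: dehomog_def is_poly_def)
  next
    case True
    have "dehomog n (homog_deg n D f) \<alpha> = homog_deg n D f (lift_deg n D \<alpha>)"
      by (rule dehomog_homogeneous[OF _ True]) (use homog_deg_nonzeroD(2) in blast)
    also have "\<dots> = f \<alpha>"
    proof (cases "mdeg n \<alpha> \<le> D")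
      case False
      then have "f \<alpha> = 0" using assms(2) by auto
      moreover have "homog_deg n D f (lift_deg n D \<alpha>) = 0"
        using False by (simp add: homog_deg_def lift_deg_def mdeg_Suc mdeg_fun_upd)
      ultimately show ?thesis by simp
    qed (simp add: True homog_deg_lift_deg)
    finally show ?thesis .
  qed
qed

lemma mdeg_le_pdeg: "is_poly n f \<Longrightarrow> f \<alpha> \<noteq> 0 \<Longrightarrow> mdeg n \<alpha> \<le> pdeg n f"
  unfolding pdeg_def by (rule Max_ge) (auto simp: is_poly_def)

definition max_deg :: "nat \<Rightarrow> 'a::zero series \<Rightarrow> nat" where
  "max_deg N a = Max (insert 0 (mdeg N ` supp a))"

lemma mdeg_le_max_deg: "is_poly N a \<Longrightarrow> a \<alpha> \<noteq> 0 \<Longrightarrow> mdeg N \<alpha> \<le> max_deg N a"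
  unfolding max_deg_def by (rule Max_ge) (auto simp: is_poly_def supp_def)

section \<open>Polynomial ideals and Tate ideals\<close>

lemma poly_idealE:
  assumes "f \<in> poly_ideal N P"
  obtains k :: nat and g u where "\<forall>i<k. g i \<in> P \<and> is_poly N (u i)"
    "f = (\<lambda>\<alpha>. \<Sum>i<k. series_mult (u i) (g i) \<alpha>)"
  using assms unfolding poly_ideal_def by blast

lemma poly_idealI:
  fixes k :: nat
  shows "(\<And>i. i < k \<Longrightarrow> g i \<in> P \<and> is_poly N (u i)) \<Longrightarrow>
    (\<lambda>\<alpha>. \<Sum>i<k. series_mult (u i) (g i) \<alpha>) \<in> poly_ideal N P"
  unfolding poly_ideal_def by blast

lemma tate_idealE:
  assumes "f \<in> tate_ideal val N r P"
  obtains k :: nat and g u where "\<forall>i<k. g i \<in> P \<and> tate val N r (u i)"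
    "f = (\<lambda>\<alpha>. \<Sum>i<k. series_mult (u i) (g i) \<alpha>)"
  using assms unfolding tate_ideal_def by blast

lemma tate_idealI:
  fixes k :: nat
  shows "(\<And>i. i < k \<Longrightarrow> g i \<in> P \<and> tate val N r (u i)) \<Longrightarrow>
    (\<lambda>\<alpha>. \<Sum>i<k. series_mult (u i) (g i) \<alpha>) \<in> tate_ideal val N r P"
  unfolding tate_ideal_def by blast

lemma tate_of_is_poly: "is_poly N f \<Longrightarrow> tate val N r f"
  unfolding is_poly_def tate_def by (auto intro: finite_subset[of _ "{\<alpha>. f \<alpha> \<noteq> 0}"])

lemma poly_ideal_subset_tate_ideal: "poly_ideal N P \<subseteq> tate_ideal val N r P"
  by (auto elim!: poly_idealE intro!: tate_idealI tate_of_is_poly)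

lemma is_poly_sum:
  fixes k :: nat
  assumes "\<forall>i<k. is_poly N (x i)"
  shows "is_poly N (\<lambda>\<gamma>. \<Sum>i<k. x i \<gamma>)"
proof -
  have S: "{\<gamma>. (\<Sum>i<k. x i \<gamma>) \<noteq> 0} \<subseteq> (\<Union>i<k. {\<gamma>. x i \<gamma> \<noteq> 0})"
    by (auto elim!: sum.not_neutral_contains_not_neutral)
  have "finite (\<Union>i<k. {\<gamma>. x i \<gamma> \<noteq> 0})"
    by (intro finite_UN_I) (use assms in \<open>auto simp: is_poly_def\<close>)
  with S have "finite {\<gamma>. (\<Sum>i<k. x i \<gamma>) \<noteq> 0}" by (rule finite_subset)
  moreover have "\<forall>\<gamma>. (\<Sum>i<k. x i \<gamma>) \<noteq> 0 \<longrightarrow> monoN N \<gamma>"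
    using S assms unfolding is_poly_def by blast
  ultimately show ?thesis unfolding is_poly_def by blast
qed

lemma is_poly_poly_ideal:
  fixes P :: "'a::comm_ring_1 series set"
  assumes "\<forall>p\<in>P. is_poly N p" "f \<in> poly_ideal N P"
  shows "is_poly N f"
proof -
  obtain k :: nat and g u where gu: "\<forall>i<k. g i \<in> P \<and> is_poly N (u i)"
    "f = (\<lambda>\<alpha>. \<Sum>i<k. series_mult (u i) (g i) \<alpha>)"
    using assms(2) by (rule poly_idealE)
  have "\<forall>i<k. is_poly N (series_mult (u i) (g i))"
    using gu(1) assms(1) by (simp add: is_poly_series_mult)
  then show ?thesis unfolding gu(2) by (rule is_poly_sum)
qed

definition one_series :: "'a::comm_ring_1 series" where
  "one_series \<alpha> = (if \<alpha> = (\<lambda>_. 0) then 1 else 0)"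

lemma series_mult_one_series:
  fixes g :: "'a::comm_ring_1 series"
  assumes "is_poly N g"
  shows "series_mult one_series g = g"
proof
  fix \<gamma> :: mono
  let ?S = "{\<alpha>. \<forall>i. \<alpha> i \<le> \<gamma> i}"
  have "series_mult one_series g \<gamma> = (\<Sum>\<alpha>\<in>?S. if \<alpha> = (\<lambda>_. 0) then g (mminus \<gamma> \<alpha>) else 0)"
    unfolding series_mult_altdef one_series_def by (intro sum.cong) auto
  also have "\<dots> = g \<gamma>"
  proof (cases "finite ?S")
    case True
    then show ?thesis by (simp add: mminus_def)
  next
    case False
    then have "\<not> monoN N \<gamma>" using finite_divisors by blast
    then have "g \<gamma> = 0" using assms unfolding is_poly_def by blast
    then show ?thesis using False by simp
  qed
  finally show "series_mult one_series g \<gamma> = g \<gamma>" .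
qed

lemma mem_tate_ideal:
  fixes g :: "'a::comm_ring_1 series"
  assumes "g \<in> P" "is_poly N g"
  shows "g \<in> tate_ideal val N r P"
proof -
  have "is_poly N (one_series :: 'a series)"
    unfolding is_poly_def monoN_def one_series_def by (auto split: if_splits)
  then have "(\<lambda>\<alpha>. \<Sum>i<Suc 0. series_mult one_series g \<alpha>) \<in> tate_ideal val N r P"
    using assms(1) by (intro tate_idealI) (simp add: tate_of_is_poly)
  then show ?thesis by (simp add: series_mult_one_series[OF assms(2)])
qed

lemma dehomog_mem_poly_ideal:
  fixes P :: "'a::comm_ring_1 series set"
  assumes P: "\<forall>f\<in>P. is_poly n f" and h: "h \<in> poly_ideal (Suc n) (homog n ` P)"
  shows "dehomog n h \<in> poly_ideal n P"
proof -
  obtain k :: nat and g w where gw: "\<forall>j<k. g j \<in> homog n ` P \<and> is_poly (Suc n) (w j)"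
    "h = (\<lambda>\<alpha>. \<Sum>j<k. series_mult (w j) (g j) \<alpha>)"
    using h by (rule poly_idealE)
  have "\<forall>j\<in>{..<k}. \<exists>f. f \<in> P \<and> g j = homog n f" using gw(1) by blast
  then have "\<exists>f. \<forall>j\<in>{..<k}. f j \<in> P \<and> g j = homog n (f j)" by (rule bchoice)
  then obtain f where f: "\<forall>j<k. f j \<in> P \<and> g j = homog n (f j)" by auto
  have pf: "is_poly n (f j)" if "j < k" for j using f P that by blast
  have pg: "is_poly (Suc n) (g j)" if "j < k" for j
    using f that is_poly_homog_deg[OF pf[OF that]] by (simp add: homog_eq_homog_deg)
  have "dehomog n (g j) = f j" if "j < k" for j
    using f that dehomog_homog_deg[OF pf[OF that]] mdeg_le_pdeg[OF pf[OF that]]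
    by (simp add: homog_eq_homog_deg)
  then have "dehomog n h = (\<lambda>\<alpha>. \<Sum>j<k. series_mult (dehomog n (w j)) (f j) \<alpha>)"
    unfolding gw(2) using gw(1) pg
    by (subst dehomog_sum) (simp_all add: is_poly_series_mult dehomog_series_mult)
  also have "\<dots> \<in> poly_ideal n P"
    using f gw(1) by (intro poly_idealI) (simp add: is_poly_dehomog)
  finally show ?thesis .
qed

lemma homog_deg_combination_mem_poly_ideal:
  fixes u g :: "nat \<Rightarrow> 'a::comm_ring_1 series"
  assumes poly: "\<And>i. i < k \<Longrightarrow> is_poly n (u i) \<and> is_poly n (g i)"
    and mem: "\<And>i. i < k \<Longrightarrow> homog_deg n (D i) (g i) \<in> J"
    and deg: "\<And>i \<alpha>. i < k \<Longrightarrow> g i \<alpha> \<noteq> 0 \<Longrightarrow> mdeg n \<alpha> \<le> D i"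
    and C: "\<And>i. i < k \<Longrightarrow> max_deg n (u i) + D i \<le> C"
  shows "homog_deg n C (\<lambda>\<gamma>. \<Sum>i<k. series_mult (u i) (g i) \<gamma>) \<in> poly_ideal (Suc n) J"
proof -
  have "homog_deg n C (series_mult (u i) (g i)) =
        series_mult (homog_deg n (C - D i) (u i)) (homog_deg n (D i) (g i))" if i: "i < k" for i
  proof -
    have "\<forall>\<alpha>. u i \<alpha> \<noteq> 0 \<longrightarrow> mdeg n \<alpha> \<le> C - D i"
      using mdeg_le_max_deg poly[OF i] C[OF i] by fastforce
    then have "homog_deg n (C - D i + D i) (series_mult (u i) (g i)) =
        series_mult (homog_deg n (C - D i) (u i)) (homog_deg n (D i) (g i))"
      using poly[OF i] deg[OF i] by (intro homog_deg_series_mult) auto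
    then show ?thesis using C[OF i] by simp
  qed
  then have "homog_deg n C (\<lambda>\<gamma>. \<Sum>i<k. series_mult (u i) (g i) \<gamma>) =
      (\<lambda>\<gamma>. \<Sum>i<k. series_mult (homog_deg n (C - D i) (u i)) (homog_deg n (D i) (g i)) \<gamma>)"
    unfolding homog_deg_sum by (intro ext sum.cong) auto
  also have "\<dots> \<in> poly_ideal (Suc n) J"
    using mem poly by (intro poly_idealI) (simp add: is_poly_homog_deg)
  finally show ?thesis .
qed

lemma homog_deg_mem_poly_ideal:
  fixes P :: "'a::comm_ring_1 series set"
  assumes P: "\<forall>f\<in>P. is_poly n f" and g: "g \<in> poly_ideal n P"
  shows "\<exists>D0. \<forall>D\<ge>D0. homog_deg n D g \<in> poly_ideal (Suc n) (homog n ` P)"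
proof -
  obtain k :: nat and f w where fw: "\<forall>j<k. f j \<in> P \<and> is_poly n (w j)"
    "g = (\<lambda>\<alpha>. \<Sum>j<k. series_mult (w j) (f j) \<alpha>)"
    using g by (rule poly_idealE)
  have pf: "is_poly n (f j)" if "j < k" for j using fw P that by blast
  define D0 where "D0 = (\<Sum>j<k. max_deg n (w j) + pdeg n (f j))"
  have "homog_deg n D g \<in> poly_ideal (Suc n) (homog n ` P)" if D: "D0 \<le> D" for D
    unfolding fw(2)
  proof (rule homog_deg_combination_mem_poly_ideal[where D = "\<lambda>j. pdeg n (f j)"])
    fix j assume j: "j < k"
    show "is_poly n (w j) \<and> is_poly n (f j)" using fw(1) pf j by blast
    show "homog_deg n (pdeg n (f j)) (f j) \<in> homog n ` P"
      using fw(1) j by (auto simp: homog_eq_homog_deg)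
    show "mdeg n \<alpha> \<le> pdeg n (f j)" if "f j \<alpha> \<noteq> 0" for \<alpha>
      using mdeg_le_pdeg[OF pf[OF j] that] .
    have "max_deg n (w j) + pdeg n (f j) \<le> D0"
      unfolding D0_def using j by (intro member_le_sum) auto
    then show "max_deg n (w j) + pdeg n (f j) \<le> D" using D by linarith
  qed
  then show ?thesis by blast
qed

lemma ex_homog_deg_mem_poly_ideal:
  fixes P :: "'a::comm_ring_1 series set"
  assumes P: "\<forall>f\<in>P. is_poly n f" and p: "p \<in> poly_ideal n (poly_ideal n P)"
  obtains C where "\<forall>\<alpha>. p \<alpha> \<noteq> 0 \<longrightarrow> mdeg n \<alpha> \<le> C"
    "homog_deg n C p \<in> poly_ideal (Suc n) (poly_ideal (Suc n) (homog n ` P))"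
proof -
  let ?J = "poly_ideal (Suc n) (homog n ` P)"
  obtain k :: nat and g w where gw: "\<forall>i<k. g i \<in> poly_ideal n P \<and> is_poly n (w i)"
    "p = (\<lambda>\<alpha>. \<Sum>i<k. series_mult (w i) (g i) \<alpha>)"
    using p by (rule poly_idealE)
  have pg: "is_poly n (g i)" if "i < k" for i using gw(1) is_poly_poly_ideal[OF P] that by blast
  have pp: "is_poly n p" by (rule is_poly_poly_ideal[OF _ p]) (use is_poly_poly_ideal[OF P] in blast)
  have "\<forall>i\<in>{..<k}. \<exists>D0. \<forall>D\<ge>D0. homog_deg n D (g i) \<in> ?J"
    using gw(1) homog_deg_mem_poly_ideal[OF P] by blast
  then have "\<exists>D0. \<forall>i\<in>{..<k}. \<forall>D\<ge>D0 i. homog_deg n D (g i) \<in> ?J" by (rule bchoice)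
  then obtain D0 where D0: "\<forall>i\<in>{..<k}. \<forall>D\<ge>D0 i. homog_deg n D (g i) \<in> ?J" ..
  define D where "D i = D0 i + max_deg n (g i)" for i
  define C where "C = max_deg n p + (\<Sum>i<k. max_deg n (w i) + D i)"
  have "\<forall>\<alpha>. p \<alpha> \<noteq> 0 \<longrightarrow> mdeg n \<alpha> \<le> C"
    using mdeg_le_max_deg[OF pp] unfolding C_def by fastforce
  moreover have "homog_deg n C p \<in> poly_ideal (Suc n) ?J"
    unfolding gw(2)
  proof (rule homog_deg_combination_mem_poly_ideal[where D = D])
    fix i assume i: "i < k"
    show "is_poly n (w i) \<and> is_poly n (g i)" using gw(1) pg i by blast
    show "homog_deg n (D i) (g i) \<in> ?J" using D0 i by (simp add: D_def)
    show "mdeg n \<alpha> \<le> D i" if "g i \<alpha> \<noteq> 0" for \<alpha>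
      using mdeg_le_max_deg[OF pg[OF i] that] by (simp add: D_def)
    have "max_deg n (w i) + D i \<le> (\<Sum>i<k. max_deg n (w i) + D i)"
      using i by (intro member_le_sum) auto
    then show "max_deg n (w i) + D i \<le> C" unfolding C_def by linarith
  qed
  ultimately show ?thesis by (rule that)
qed

section \<open>Leading terms\<close>

definition term_less :: "('a \<Rightarrow> mono \<Rightarrow> rat) \<Rightarrow> (mono \<Rightarrow> mono \<Rightarrow> bool) \<Rightarrow> 'a \<Rightarrow> mono \<Rightarrow> 'a \<Rightarrow> mono \<Rightarrow> bool" where
  "term_less v Q a \<alpha> b \<beta> \<longleftrightarrow> v b \<beta> < v a \<alpha> \<or> (v a \<alpha> = v b \<beta> \<and> Q \<alpha> \<beta>)"

definition strict_total_on :: "mono set \<Rightarrow> (mono \<Rightarrow> mono \<Rightarrow> bool) \<Rightarrow> bool" where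
  "strict_total_on S Q \<longleftrightarrow> (\<forall>\<alpha>\<in>S. \<not> Q \<alpha> \<alpha>) \<and>
     (\<forall>\<alpha>\<in>S. \<forall>\<beta>\<in>S. \<forall>\<gamma>\<in>S. Q \<alpha> \<beta> \<longrightarrow> Q \<beta> \<gamma> \<longrightarrow> Q \<alpha> \<gamma>) \<and>
     (\<forall>\<alpha>\<in>S. \<forall>\<beta>\<in>S. \<alpha> \<noteq> \<beta> \<longrightarrow> Q \<alpha> \<beta> \<or> Q \<beta> \<alpha>)"

definition is_max_term :: "('a::zero \<Rightarrow> mono \<Rightarrow> 'a \<Rightarrow> mono \<Rightarrow> bool) \<Rightarrow> 'a series \<Rightarrow> mono \<Rightarrow> bool" where
  "is_max_term tless f \<alpha> \<longleftrightarrow> f \<alpha> \<noteq> 0 \<and> (\<forall>\<beta>. f \<beta> \<noteq> 0 \<longrightarrow> \<beta> \<noteq> \<alpha> \<longrightarrow> tless (f \<beta>) \<beta> (f \<alpha>) \<alpha>)"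

definition deg_mless :: "nat \<Rightarrow> (mono \<Rightarrow> mono \<Rightarrow> bool) \<Rightarrow> mono \<Rightarrow> mono \<Rightarrow> bool" where
  "deg_mless n mless \<alpha> \<beta> \<longleftrightarrow> mdeg (Suc n) \<alpha> < mdeg (Suc n) \<beta> \<or>
     (mdeg (Suc n) \<alpha> = mdeg (Suc n) \<beta> \<and> mless (\<alpha>(n := 0)) (\<beta>(n := 0)))"

lemma ord_rm_eq_term_less: "ord_rm val n r mless = term_less (val_r val n r) mless"
  by (intro ext) (simp add: ord_rm_def term_less_def)

lemma ord_r0m_eq_term_less: "ord_r0m val n r mless = term_less (val_r val n r) (deg_mless n mless)"
  by (intro ext) (auto simp: ord_r0m_def term_less_def deg_mless_def)

lemma strict_total_on_mless: "monomial_order n mless \<Longrightarrow> strict_total_on {\<alpha>. monoN n \<alpha>} mless"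
  unfolding monomial_order_def strict_total_on_def by blast

lemma strict_total_on_deg_mless:
  assumes "monomial_order n mless"
  shows "strict_total_on {\<beta>. monoN (Suc n) \<beta>} (deg_mless n mless)"
proof -
  have mo: "strict_total_on {\<alpha>. monoN n \<alpha>} mless" using strict_total_on_mless[OF assms] .
  have inj: "\<alpha> = \<beta>" if "\<alpha>(n := 0) = \<beta>(n := 0)" "mdeg (Suc n) \<alpha> = mdeg (Suc n) \<beta>" for \<alpha> \<beta>
  proof
    fix i
    have "mdeg n \<alpha> = mdeg n \<beta>" using that(1) mdeg_fun_upd by metis
    then have "\<alpha> n = \<beta> n" using that(2) by (simp add: mdeg_Suc)
    then show "\<alpha> i = \<beta> i" using fun_cong[OF that(1), of i] by (cases "i = n") auto
  qed
  show ?thesis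
    unfolding strict_total_on_def
  proof (intro conjI ballI impI)
    fix \<alpha> \<beta> \<gamma> assume "\<alpha> \<in> {\<beta>. monoN (Suc n) \<beta>}" "\<beta> \<in> {\<beta>. monoN (Suc n) \<beta>}"
      "\<gamma> \<in> {\<beta>. monoN (Suc n) \<beta>}"
    then have m0: "\<alpha>(n := 0) \<in> {\<alpha>. monoN n \<alpha>}" "\<beta>(n := 0) \<in> {\<alpha>. monoN n \<alpha>}"
      "\<gamma>(n := 0) \<in> {\<alpha>. monoN n \<alpha>}" by (simp_all add: monoN_fun_upd_0)
    show "\<not> deg_mless n mless \<alpha> \<alpha>"
      using mo m0 unfolding strict_total_on_def deg_mless_def by blast
    show "deg_mless n mless \<alpha> \<gamma>" if "deg_mless n mless \<alpha> \<beta>" "deg_mless n mless \<beta> \<gamma>"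
      using that mo m0 unfolding strict_total_on_def deg_mless_def by (metis less_trans)
    show "deg_mless n mless \<alpha> \<beta> \<or> deg_mless n mless \<beta> \<alpha>" if "\<alpha> \<noteq> \<beta>"
      using that inj mo m0 unfolding strict_total_on_def deg_mless_def by (metis linorder_neqE_nat)
  qed
qed

lemma lm_eq_is_max_term:
  assumes total: "strict_total_on S Q" and supp: "\<forall>\<alpha>. f \<alpha> \<noteq> 0 \<longrightarrow> \<alpha> \<in> S"
    and max: "is_max_term (term_less v Q) f \<alpha>"
  shows "lm (term_less v Q) f = \<alpha>"
  unfolding lm_def
proof (rule the_equality)
  show "f \<alpha> \<noteq> 0 \<and> (\<forall>\<beta>. f \<beta> \<noteq> 0 \<longrightarrow> \<beta> \<noteq> \<alpha> \<longrightarrow> term_less v Q (f \<beta>) \<beta> (f \<alpha>) \<alpha>)"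
    using max unfolding is_max_term_def .
next
  fix \<beta> assume \<beta>: "f \<beta> \<noteq> 0 \<and> (\<forall>\<gamma>. f \<gamma> \<noteq> 0 \<longrightarrow> \<gamma> \<noteq> \<beta> \<longrightarrow> term_less v Q (f \<gamma>) \<gamma> (f \<beta>) \<beta>)"
  show "\<beta> = \<alpha>"
  proof (rule ccontr)
    assume ne: "\<beta> \<noteq> \<alpha>"
    then have "term_less v Q (f \<beta>) \<beta> (f \<alpha>) \<alpha>" "term_less v Q (f \<alpha>) \<alpha> (f \<beta>) \<beta>"
      using max \<beta> unfolding is_max_term_def by auto
    moreover have "\<alpha> \<in> S" "\<beta> \<in> S" using supp max \<beta> unfolding is_max_term_def by auto
    ultimately have "\<not> Q \<alpha> \<alpha>" "Q \<alpha> \<beta> \<Longrightarrow> Q \<beta> \<alpha> \<Longrightarrow> Q \<alpha> \<alpha>"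
      using total unfolding strict_total_on_def by blast+
    with \<open>term_less v Q (f \<beta>) \<beta> (f \<alpha>) \<alpha>\<close> \<open>term_less v Q (f \<alpha>) \<alpha> (f \<beta>) \<beta>\<close>
    show False unfolding term_less_def by linarith
  qed
qed

lemma finite_ex_greatest:
  assumes "finite S" "S \<noteq> {}"
    and "\<forall>x\<in>S. \<forall>y\<in>S. \<forall>z\<in>S. R x y \<longrightarrow> R y z \<longrightarrow> R x z"
    and "\<forall>x\<in>S. \<forall>y\<in>S. x \<noteq> y \<longrightarrow> R x y \<or> R y x"
  shows "\<exists>m\<in>S. \<forall>x\<in>S. x \<noteq> m \<longrightarrow> R x m"
  using assms
proof (induction S rule: finite_ne_induct)
  case (singleton x) then show ?case by auto
next
  case (insert x F)
  have trF: "\<forall>x\<in>F. \<forall>y\<in>F. \<forall>z\<in>F. R x y \<longrightarrow> R y z \<longrightarrow> R x z" using insert.prems(1) by blast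
  have toF: "\<forall>x\<in>F. \<forall>y\<in>F. x \<noteq> y \<longrightarrow> R x y \<or> R y x" using insert.prems(2) by blast
  obtain m where m: "m \<in> F" "\<forall>y\<in>F. y \<noteq> m \<longrightarrow> R y m" using insert.IH[OF trF toF] by blast
  have xm: "x \<noteq> m" using m(1) insert.hyps by blast
  show ?case
  proof (cases "R x m")
    case True
    have "\<forall>y\<in>insert x F. y \<noteq> m \<longrightarrow> R y m" using True m(2) by blast
    then show ?thesis using m(1) by blast
  next
    case False
    then have Rmx: "R m x" using insert.prems(2) m(1) xm by blast
    have "\<forall>y\<in>insert x F. y \<noteq> x \<longrightarrow> R y x"
    proof (intro ballI impI)
      fix y assume y: "y \<in> insert x F" "y \<noteq> x"
      then have yF: "y \<in> F" by blast
      show "R y x"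
      proof (cases "y = m")
        case True then show ?thesis using Rmx by simp
      next
        case False
        then have "R y m" using m(2) yF by blast
        then show ?thesis using Rmx insert.prems(1) yF m(1) by blast
      qed
    qed
    then show ?thesis by blast
  qed
qed

lemma ex_is_max_term:
  assumes total: "strict_total_on S Q" and supp: "\<forall>\<alpha>. f \<alpha> \<noteq> 0 \<longrightarrow> \<alpha> \<in> S"
    and nz: "f \<noteq> zero_series" and fin: "\<forall>c. finite {\<gamma>. f \<gamma> \<noteq> 0 \<and> v (f \<gamma>) \<gamma> \<le> c}"
  shows "\<exists>\<alpha>. is_max_term (term_less v Q) f \<alpha>"
proof -
  obtain \<gamma>0 where \<gamma>0: "f \<gamma>0 \<noteq> 0" using nz unfolding zero_series_def by auto
  let ?S = "{\<gamma>. f \<gamma> \<noteq> 0 \<and> v (f \<gamma>) \<gamma> \<le> v (f \<gamma>0) \<gamma>0}"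
  let ?R = "\<lambda>x y. term_less v Q (f x) x (f y) y"
  have S: "?S \<subseteq> S" using supp by auto
  have "\<exists>m\<in>?S. \<forall>x\<in>?S. x \<noteq> m \<longrightarrow> ?R x m"
  proof (rule finite_ex_greatest)
    show "finite ?S" using fin by blast
    show "?S \<noteq> {}" using \<gamma>0 by auto
    show "\<forall>x\<in>?S. \<forall>y\<in>?S. \<forall>z\<in>?S. ?R x y \<longrightarrow> ?R y z \<longrightarrow> ?R x z"
    proof (intro ballI impI)
      fix x y z assume "x \<in> ?S" "y \<in> ?S" "z \<in> ?S" "?R x y" "?R y z"
      moreover have "Q x y \<Longrightarrow> Q y z \<Longrightarrow> Q x z"
        using total S \<open>x \<in> ?S\<close> \<open>y \<in> ?S\<close> \<open>z \<in> ?S\<close> unfolding strict_total_on_def by blast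
      ultimately show "?R x z" unfolding term_less_def by auto
    qed
    show "\<forall>x\<in>?S. \<forall>y\<in>?S. x \<noteq> y \<longrightarrow> ?R x y \<or> ?R y x"
    proof (intro ballI impI)
      fix x y assume "x \<in> ?S" "y \<in> ?S" "x \<noteq> y"
      moreover have "Q x y \<or> Q y x"
        using total S \<open>x \<in> ?S\<close> \<open>y \<in> ?S\<close> \<open>x \<noteq> y\<close> unfolding strict_total_on_def by blast
      ultimately show "?R x y \<or> ?R y x" unfolding term_less_def by auto
    qed
  qed
  then obtain m where m: "m \<in> ?S" "\<forall>x\<in>?S. x \<noteq> m \<longrightarrow> ?R x m" by blast
  have "?R \<beta> m" if "f \<beta> \<noteq> 0" "\<beta> \<noteq> m" for \<beta>
    using m that by (cases "\<beta> \<in> ?S") (auto simp: term_less_def)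
  then show ?thesis using m(1) unfolding is_max_term_def by auto
qed

lemma val_r_fun_upd: "val_r val n r a (\<alpha>(n := u)) = val_r val n r a \<alpha>"
proof -
  have "(\<Sum>i<n. r i * of_nat ((\<alpha>(n := u)) i)) = (\<Sum>i<n. r i * of_nat (\<alpha> i))"
    by (rule sum.cong) auto
  then show ?thesis unfolding val_r_def by simp
qed

lemma is_max_term_homog_deg:
  assumes max: "is_max_term (term_less (val_r val n r) mless) p \<gamma>"
    and deg: "\<forall>\<alpha>. p \<alpha> \<noteq> 0 \<longrightarrow> monoN n \<alpha> \<and> mdeg n \<alpha> \<le> C"
  shows "is_max_term (term_less (val_r val n r) (deg_mless n mless)) (homog_deg n C p) (lift_deg n C \<gamma>)"
proof -
  let ?v = "val_r val n r" and ?P = "homog_deg n C p"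
  have p\<gamma>: "p \<gamma> \<noteq> 0" using max unfolding is_max_term_def by blast
  then have \<gamma>: "monoN n \<gamma>" "mdeg n \<gamma> \<le> C" using deg by auto
  have P\<gamma>: "?P (lift_deg n C \<gamma>) = p \<gamma>" using homog_deg_lift_deg[OF \<gamma>] .
  have "term_less ?v (deg_mless n mless) (?P \<beta>) \<beta> (?P (lift_deg n C \<gamma>)) (lift_deg n C \<gamma>)"
    if \<beta>: "?P \<beta> \<noteq> 0" "\<beta> \<noteq> lift_deg n C \<gamma>" for \<beta>
  proof -
    let ?\<alpha> = "\<beta>(n := 0)"
    have "mdeg (Suc n) \<beta> = C" "p ?\<alpha> \<noteq> 0" "\<beta> = lift_deg n C ?\<alpha>"
      using homog_deg_nonzeroD[OF \<beta>(1)] by blast+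
    then have "?\<alpha> \<noteq> \<gamma>" "?P \<beta> = p ?\<alpha>" "mdeg (Suc n) \<beta> = mdeg (Suc n) (lift_deg n C \<gamma>)"
      using \<beta> homog_deg_lift_deg[of n ?\<alpha> C p] deg mdeg_lift_deg[OF \<gamma>(2)] by auto
    moreover have "term_less ?v mless (p ?\<alpha>) ?\<alpha> (p \<gamma>) \<gamma>"
      using max \<open>p ?\<alpha> \<noteq> 0\<close> \<open>?\<alpha> \<noteq> \<gamma>\<close> unfolding is_max_term_def by blast
    ultimately show ?thesis
      using P\<gamma> lift_deg_fun_upd_0[OF \<gamma>(1)] val_r_fun_upd[of val n r _ \<beta> 0, symmetric]
        val_r_fun_upd[of val n r _ "lift_deg n C \<gamma>" 0, symmetric]
      unfolding term_less_def deg_mless_def by simp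
  qed
  then show ?thesis using P\<gamma> p\<gamma> unfolding is_max_term_def by auto
qed

lemma is_max_term_dehomog:
  assumes h: "is_poly (Suc n) h" "homogeneous (Suc n) h"
    and max: "is_max_term (term_less (val_r val n r) (deg_mless n mless)) h x"
  shows "is_max_term (term_less (val_r val n r) mless) (dehomog n h) (x(n := 0))"
proof -
  let ?v = "val_r val n r" and ?x = "x(n := 0)"
  obtain d where d: "\<forall>\<beta>. h \<beta> \<noteq> 0 \<longrightarrow> mdeg (Suc n) \<beta> = d"
    using h(2) unfolding homogeneous_def by blast
  have hx: "h x \<noteq> 0" using max unfolding is_max_term_def by blast
  have x: "monoN (Suc n) x" "mdeg (Suc n) x = d" using h(1) d hx unfolding is_poly_def by auto
  then have "x n = d - mdeg n ?x" by (simp add: mdeg_Suc mdeg_fun_upd)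
  then have "x = lift_deg n d ?x" unfolding lift_deg_def by (metis fun_upd_triv fun_upd_upd)
  then have dhx: "dehomog n h ?x = h x"
    using dehomog_homogeneous[OF d monoN_fun_upd_0[OF x(1)]] by simp
  have "term_less ?v mless (dehomog n h \<alpha>) \<alpha> (dehomog n h ?x) ?x"
    if \<alpha>: "dehomog n h \<alpha> \<noteq> 0" "\<alpha> \<noteq> ?x" for \<alpha>
  proof -
    let ?\<beta> = "lift_deg n d \<alpha>"
    have "monoN n \<alpha>" using \<alpha>(1) by (auto simp: dehomog_def split: if_splits)
    then have \<beta>: "dehomog n h \<alpha> = h ?\<beta>" "?\<beta>(n := 0) = \<alpha>"
      using dehomog_homogeneous[OF d] lift_deg_fun_upd_0 by auto
    then have "h ?\<beta> \<noteq> 0" "?\<beta> \<noteq> x" using \<alpha> by auto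
    then have "term_less ?v (deg_mless n mless) (h ?\<beta>) ?\<beta> (h x) x"
      "mdeg (Suc n) ?\<beta> = mdeg (Suc n) x"
      using max d hx unfolding is_max_term_def by auto
    then show ?thesis
      using \<beta> dhx val_r_fun_upd[of val n r _ ?\<beta> 0, symmetric] val_r_fun_upd[of val n r _ x 0, symmetric]
      unfolding term_less_def deg_mless_def by simp
  qed
  then show ?thesis using dhx hx unfolding is_max_term_def by auto
qed

lemma GB_dehomog_lm_dvd:
  assumes mo: "monomial_order n mless"
    and G: "\<forall>h\<in>G. is_poly (Suc n) h \<and> homogeneous (Suc n) h"
    and GB: "is_GB (ord_r0m val n r mless) J G"
    and P: "P \<in> J" "\<forall>\<beta>. P \<beta> \<noteq> 0 \<longrightarrow> monoN (Suc n) \<beta>"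
    and max: "is_max_term (term_less (val_r val n r) (deg_mless n mless)) P \<beta>"
  shows "\<exists>h\<in>G. dehomog n h \<noteq> zero_series \<and>
           mono_dvd (lm (ord_rm val n r mless) (dehomog n h)) (\<beta>(n := 0))"
proof -
  let ?v = "val_r val n r"
  note total = strict_total_on_deg_mless[OF mo]
  have "P \<noteq> zero_series" using max unfolding is_max_term_def zero_series_def by auto
  then obtain h where h: "h \<in> G" "h \<noteq> zero_series"
    "mono_dvd (lm (ord_r0m val n r mless) h) (lm (ord_r0m val n r mless) P)"
    using GB P(1) unfolding is_GB_def by blast
  have "lm (ord_r0m val n r mless) P = \<beta>"
    unfolding ord_r0m_eq_term_less by (rule lm_eq_is_max_term[OF total _ max]) (use P(2) in simp)
  with h(3) have h\<beta>: "mono_dvd (lm (ord_r0m val n r mless) h) \<beta>" by simp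
  have hp: "is_poly (Suc n) h" "homogeneous (Suc n) h" using G h(1) by auto
  then have supp: "\<forall>\<alpha>. h \<alpha> \<noteq> 0 \<longrightarrow> \<alpha> \<in> {\<beta>. monoN (Suc n) \<beta>}" unfolding is_poly_def by blast
  have "\<forall>c. finite {\<gamma>. h \<gamma> \<noteq> 0 \<and> ?v (h \<gamma>) \<gamma> \<le> c}" using hp(1) unfolding is_poly_def by auto
  then obtain x where x: "is_max_term (term_less ?v (deg_mless n mless)) h x"
    using ex_is_max_term[where v = ?v, OF total supp h(2)] by blast
  have "lm (ord_r0m val n r mless) h = x"
    unfolding ord_r0m_eq_term_less by (rule lm_eq_is_max_term[OF total supp x])
  then have dvd: "mono_dvd (x(n := 0)) (\<beta>(n := 0))" using h\<beta> unfolding mono_dvd_def by simp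
  have dx: "is_max_term (term_less ?v mless) (dehomog n h) (x(n := 0))"
    using is_max_term_dehomog[OF hp x] .
  have "lm (ord_rm val n r mless) (dehomog n h) = x(n := 0)"
    unfolding ord_rm_eq_term_less
    by (rule lm_eq_is_max_term[OF strict_total_on_mless[OF mo] _ dx]) (simp add: dehomog_def)
  moreover have "dehomog n h \<noteq> zero_series" using dx unfolding is_max_term_def zero_series_def by auto
  ultimately show ?thesis using h(1) dvd by auto
qed

section \<open>Valuations and truncation\<close>

definition truncate :: "('a \<Rightarrow> mono \<Rightarrow> rat) \<Rightarrow> rat \<Rightarrow> 'a::zero series \<Rightarrow> 'a series" where
  "truncate v M u \<alpha> = (if v (u \<alpha>) \<alpha> \<le> M then u \<alpha> else 0)"

lemma is_poly_truncate:
  assumes "tate val N r u"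
  shows "is_poly N (truncate (val_r val N r) M u)"
proof -
  have "{\<alpha>. truncate (val_r val N r) M u \<alpha> \<noteq> 0} \<subseteq> {\<alpha>. u \<alpha> \<noteq> 0 \<and> val_r val N r (u \<alpha>) \<alpha> \<le> M}"
    by (auto simp: truncate_def split: if_splits)
  moreover have "finite {\<alpha>. u \<alpha> \<noteq> 0 \<and> val_r val N r (u \<alpha>) \<alpha> \<le> M}"
    using assms by (simp add: tate_def)
  ultimately have "finite {\<alpha>. truncate (val_r val N r) M u \<alpha> \<noteq> 0}" by (rule finite_subset)
  then show ?thesis using assms by (auto simp: is_poly_def tate_def truncate_def split: if_splits)
qed

text \<open>Only multiplicativity and the ultrametric inequality of the valuation are used below.\<close>

context
  fixes val :: "'a::field \<Rightarrow> int"
  assumes dvf: "complete_dvf val"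
begin

lemma val_mult: "x \<noteq> 0 \<Longrightarrow> y \<noteq> 0 \<Longrightarrow> val (x * y) = val x + val y"
  using dvf unfolding complete_dvf_def by blast

lemma val_add: "x \<noteq> 0 \<Longrightarrow> y \<noteq> 0 \<Longrightarrow> x + y \<noteq> 0 \<Longrightarrow> min (val x) (val y) \<le> val (x + y)"
  using dvf unfolding complete_dvf_def by blast

lemma val_uminus: "val (- x) = val x"
proof -
  have "val 1 = 0" using val_mult[of 1 1] by simp
  moreover have "val ((-1) * (-1)) = val (-1) + val (-1)" by (rule val_mult) auto
  ultimately have "val (-1) = 0" by simp
  then show ?thesis using val_mult[of "-1" x] by (cases "x = 0") auto
qed

lemma val_sum_nonzero:
  assumes "sum c S \<noteq> 0"
  shows "\<exists>x\<in>S. c x \<noteq> 0 \<and> val (c x) \<le> val (sum c S)"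
proof -
  have "finite S" using assms sum.infinite by blast
  then show ?thesis using assms
  proof (induction S rule: finite_induct)
    case (insert x F)
    show ?case
    proof (cases "sum c F = 0 \<or> c x = 0")
      case True
      then show ?thesis using insert by auto
    next
      case False
      then obtain y where y: "y \<in> F" "c y \<noteq> 0" "val (c y) \<le> val (sum c F)" using insert by blast
      have "min (val (c x)) (val (sum c F)) \<le> val (sum c (insert x F))"
        using val_add[of "c x" "sum c F"] False insert by simp
      then show ?thesis using False y by (cases "val (c x) \<le> val (sum c F)") auto
    qed
  qed simp
qed

lemma val_add_eq:
  assumes "x \<noteq> 0" "d \<noteq> 0" "val x < val d"
  shows "x + d \<noteq> 0 \<and> val (x + d) = val x"
proof
  show xd: "x + d \<noteq> 0"
  proof
    assume "x + d = 0"
    then have "d = - x" by (simp add: eq_neg_iff_add_eq_0 add.commute)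
    then show False using assms val_uminus by simp
  qed
  have "min (val (x + d)) (val (- d)) \<le> val (x + d + - d)"
    using val_add[OF xd, of "- d"] assms by simp
  then show "val (x + d) = val x"
    using val_add[OF assms(1,2) xd] assms(3) val_uminus[of d] by simp
qed

lemma val_r_uminus: "val_r val N r (- x) \<alpha> = val_r val N r x \<alpha>"
  unfolding val_r_def by (simp add: val_uminus)

lemma val_r_add_eq:
  assumes "x \<noteq> 0" "d \<noteq> 0" "val_r val N r x \<alpha> < val_r val N r d \<alpha>"
  shows "x + d \<noteq> 0 \<and> val_r val N r (x + d) \<alpha> = val_r val N r x \<alpha>"
  using val_add_eq[OF assms(1,2)] assms(3) unfolding val_r_def by simp

lemma val_r_add_eq_or_gt:
  assumes "x \<noteq> 0" "d \<noteq> 0" "x + d \<noteq> 0" "c < val_r val N r d \<alpha>"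
  shows "val_r val N r (x + d) \<alpha> = val_r val N r x \<alpha> \<or> c < val_r val N r (x + d) \<alpha>"
proof (cases "val_r val N r x \<alpha> < val_r val N r d \<alpha>")
  case True
  then show ?thesis using val_r_add_eq[OF assms(1,2)] by blast
next
  case False
  have "min (val x) (val d) \<le> val (x + d)" by (rule val_add[OF assms(1-3)])
  then have "min (val_r val N r x \<alpha>) (val_r val N r d \<alpha>) \<le> val_r val N r (x + d) \<alpha>"
    unfolding val_r_def by linarith
  then show ?thesis using False assms(4) by linarith
qed

lemma val_r_mult_madd:
  "a \<noteq> 0 \<Longrightarrow> b \<noteq> 0 \<Longrightarrow>
    val_r val N r (a * b) (madd \<alpha> \<beta>) = val_r val N r a \<alpha> + val_r val N r b \<beta>"
  unfolding val_r_def madd_def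
  by (simp add: val_mult sum.distrib distrib_left algebra_simps)

lemma sum_series_mult_dominant_term:
  assumes "(\<Sum>i<k. series_mult (u i) (g i) \<gamma>) \<noteq> 0"
  obtains i \<alpha> \<beta> where "i < k" "u i \<alpha> \<noteq> 0" "g i \<beta> \<noteq> 0" "\<gamma> = madd \<alpha> \<beta>"
    "val_r val N r (u i \<alpha>) \<alpha> + val_r val N r (g i \<beta>) \<beta> \<le>
     val_r val N r (\<Sum>i<k. series_mult (u i) (g i) \<gamma>) \<gamma>"
proof -
  obtain i where i: "i < k" "series_mult (u i) (g i) \<gamma> \<noteq> 0"
    "val (series_mult (u i) (g i) \<gamma>) \<le> val (\<Sum>i<k. series_mult (u i) (g i) \<gamma>)"
    using val_sum_nonzero[OF assms] by auto
  obtain \<alpha> where \<alpha>: "\<forall>j. \<alpha> j \<le> \<gamma> j" "u i \<alpha> * g i (mminus \<gamma> \<alpha>) \<noteq> 0"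
    "val (u i \<alpha> * g i (mminus \<gamma> \<alpha>)) \<le> val (series_mult (u i) (g i) \<gamma>)"
    using val_sum_nonzero[of "\<lambda>\<alpha>. u i \<alpha> * g i (mminus \<gamma> \<alpha>)"] i(2)
    unfolding series_mult_altdef by auto
  define \<beta> where "\<beta> = mminus \<gamma> \<alpha>"
  have \<gamma>: "\<gamma> = madd \<alpha> \<beta>" using madd_mminus[OF \<alpha>(1)] unfolding \<beta>_def by simp
  have nz: "u i \<alpha> \<noteq> 0" "g i \<beta> \<noteq> 0" using \<alpha>(2) \<beta>_def by auto
  have "val (u i \<alpha> * g i \<beta>) \<le> val (\<Sum>i<k. series_mult (u i) (g i) \<gamma>)"
    using \<alpha>(3) i(3) \<beta>_def by simp
  then have "val_r val N r (u i \<alpha> * g i \<beta>) \<gamma> \<le> val_r val N r (\<Sum>i<k. series_mult (u i) (g i) \<gamma>) \<gamma>"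
    unfolding val_r_def by simp
  then show ?thesis using that i(1) nz \<gamma> val_r_mult_madd[OF nz] by simp
qed

lemma tate_of_mem_tate_ideal:
  assumes P: "\<forall>p\<in>P. is_poly N p" and f: "f \<in> tate_ideal val N r P"
  shows "tate val N r f"
proof -
  obtain k :: nat and g u where gu: "\<forall>i<k. g i \<in> P \<and> tate val N r (u i)"
    "f = (\<lambda>\<alpha>. \<Sum>i<k. series_mult (u i) (g i) \<alpha>)"
    using f by (rule tate_idealE)
  have pg: "is_poly N (g i)" if "i < k" for i using gu(1) P that by blast
  let ?v = "val_r val N r"
  have mono: "monoN N \<gamma>" if nz: "f \<gamma> \<noteq> 0" for \<gamma>
  proof -
    obtain i \<alpha> \<beta> where "i < k" "u i \<alpha> \<noteq> 0" "g i \<beta> \<noteq> 0" "\<gamma> = madd \<alpha> \<beta>"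
      "?v (u i \<alpha>) \<alpha> + ?v (g i \<beta>) \<beta> \<le> ?v (\<Sum>i<k. series_mult (u i) (g i) \<gamma>) \<gamma>"
      using nz unfolding gu(2) by (rule sum_series_mult_dominant_term)
    then show ?thesis using gu(1) pg monoN_madd unfolding tate_def is_poly_def by metis
  qed
  have "finite {\<gamma>. f \<gamma> \<noteq> 0 \<and> ?v (f \<gamma>) \<gamma> \<le> M}" for M
  proof -
    let ?T = "\<Union>i<k. \<Union>\<beta>\<in>{\<beta>. g i \<beta> \<noteq> 0}.
      (\<lambda>\<alpha>. madd \<alpha> \<beta>) ` {\<alpha>. u i \<alpha> \<noteq> 0 \<and> ?v (u i \<alpha>) \<alpha> \<le> M - ?v (g i \<beta>) \<beta>}"
    have "finite ?T"
      using gu(1) pg unfolding tate_def is_poly_def by (intro finite_UN_I finite_imageI) auto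
    moreover have "{\<gamma>. f \<gamma> \<noteq> 0 \<and> ?v (f \<gamma>) \<gamma> \<le> M} \<subseteq> ?T"
    proof
      fix \<gamma> assume "\<gamma> \<in> {\<gamma>. f \<gamma> \<noteq> 0 \<and> ?v (f \<gamma>) \<gamma> \<le> M}"
      then have \<gamma>: "(\<Sum>i<k. series_mult (u i) (g i) \<gamma>) \<noteq> 0"
        "?v (\<Sum>i<k. series_mult (u i) (g i) \<gamma>) \<gamma> \<le> M" unfolding gu(2) by auto
      obtain i \<alpha> \<beta> where "i < k" "u i \<alpha> \<noteq> 0" "g i \<beta> \<noteq> 0" "\<gamma> = madd \<alpha> \<beta>"
        "?v (u i \<alpha>) \<alpha> + ?v (g i \<beta>) \<beta> \<le> ?v (\<Sum>i<k. series_mult (u i) (g i) \<gamma>) \<gamma>"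
        using \<gamma>(1) by (rule sum_series_mult_dominant_term)
      then show "\<gamma> \<in> ?T" using \<gamma>(2) by force
    qed
    ultimately show ?thesis by (rule finite_subset[rotated])
  qed
  then show ?thesis unfolding tate_def using mono by blast
qed

lemma is_max_term_perturb:
  assumes max: "is_max_term (term_less (val_r val N r) Q) f \<gamma>"
    and close: "\<And>\<beta>. g \<beta> \<noteq> f \<beta> \<Longrightarrow> val_r val N r (f \<gamma>) \<gamma> < val_r val N r (g \<beta> - f \<beta>) \<beta>"
  shows "is_max_term (term_less (val_r val N r) Q) g \<gamma>"
proof -
  let ?v = "val_r val N r"
  have f\<gamma>: "f \<gamma> \<noteq> 0" using max unfolding is_max_term_def by blast
  have g\<gamma>: "g \<gamma> \<noteq> 0 \<and> ?v (g \<gamma>) \<gamma> = ?v (f \<gamma>) \<gamma>"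
  proof (cases "g \<gamma> = f \<gamma>")
    case False
    then have "g \<gamma> - f \<gamma> \<noteq> 0" "?v (f \<gamma>) \<gamma> < ?v (g \<gamma> - f \<gamma>) \<gamma>" using close by auto
    then show ?thesis using val_r_add_eq[OF f\<gamma>] by fastforce
  qed (simp add: f\<gamma>)
  have "term_less ?v Q (g \<beta>) \<beta> (g \<gamma>) \<gamma>" if \<beta>: "g \<beta> \<noteq> 0" "\<beta> \<noteq> \<gamma>" for \<beta>
  proof -
    have f\<beta>: "term_less ?v Q (f \<beta>) \<beta> (f \<gamma>) \<gamma>" if "f \<beta> \<noteq> 0"
      using max that \<beta>(2) unfolding is_max_term_def by blast
    consider "g \<beta> = f \<beta>" | "f \<beta> = 0" "g \<beta> \<noteq> f \<beta>" | "f \<beta> \<noteq> 0" "g \<beta> \<noteq> f \<beta>" by blast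
    then have "term_less ?v Q (g \<beta>) \<beta> (f \<gamma>) \<gamma>"
    proof cases
      case 1
      then show ?thesis using f\<beta> \<beta>(1) by simp
    next
      case 2
      then show ?thesis using close[of \<beta>] unfolding term_less_def by simp
    next
      case 3
      have "?v (f \<beta> + (g \<beta> - f \<beta>)) \<beta> = ?v (f \<beta>) \<beta> \<or> ?v (f \<gamma>) \<gamma> < ?v (f \<beta> + (g \<beta> - f \<beta>)) \<beta>"
        using 3 \<beta>(1) close[of \<beta>] by (intro val_r_add_eq_or_gt) auto
      then show ?thesis using f\<beta>[OF 3(1)] unfolding term_less_def by auto
    qed
    then show ?thesis using g\<gamma> unfolding term_less_def by simp
  qed
  then show ?thesis using g\<gamma> unfolding is_max_term_def by blast
qed

lemma truncate_error_val_r_gt: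
  fixes k :: nat
  assumes bound: "\<And>i \<beta>. i < k \<Longrightarrow> g i \<beta> \<noteq> 0 \<Longrightarrow> V \<le> M + val_r val N r (g i \<beta>) \<beta>"
    and ne: "(\<Sum>i<k. series_mult (truncate (val_r val N r) M (u i)) (g i) \<gamma>) \<noteq>
             (\<Sum>i<k. series_mult (u i) (g i) \<gamma>)"
  shows "V < val_r val N r ((\<Sum>i<k. series_mult (truncate (val_r val N r) M (u i)) (g i) \<gamma>) -
                            (\<Sum>i<k. series_mult (u i) (g i) \<gamma>)) \<gamma>"
proof -
  let ?v = "val_r val N r"
  define d where "d i \<alpha> = truncate ?v M (u i) \<alpha> - u i \<alpha>" for i \<alpha>
  have diff: "(\<Sum>i<k. series_mult (truncate ?v M (u i)) (g i) \<gamma>) - (\<Sum>i<k. series_mult (u i) (g i) \<gamma>) =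
      (\<Sum>i<k. series_mult (d i) (g i) \<gamma>)"
    unfolding d_def series_mult_def
    by (simp add: sum_subtractf[symmetric] left_diff_distrib)
  have "(\<Sum>i<k. series_mult (d i) (g i) \<gamma>) \<noteq> 0" using ne by (simp add: diff[symmetric])
  then obtain i \<alpha> \<beta> where i: "i < k" "d i \<alpha> \<noteq> 0" "g i \<beta> \<noteq> 0" "\<gamma> = madd \<alpha> \<beta>"
    "?v (d i \<alpha>) \<alpha> + ?v (g i \<beta>) \<beta> \<le> ?v (\<Sum>i<k. series_mult (d i) (g i) \<gamma>) \<gamma>"
    by (rule sum_series_mult_dominant_term)
  have "M < ?v (u i \<alpha>) \<alpha>" "d i \<alpha> = - u i \<alpha>"
    using i(2) unfolding d_def truncate_def by (auto split: if_splits)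
  then have "M < ?v (d i \<alpha>) \<alpha>" by (simp add: val_r_uminus)
  then show ?thesis using i(5) bound[OF i(1,3)] diff by simp
qed

lemma ex_poly_ideal_same_max_term:
  assumes P: "\<forall>p\<in>P. is_poly N p" and f: "f \<in> tate_ideal val N r P"
    and max: "is_max_term (term_less (val_r val N r) Q) f \<gamma>"
  shows "\<exists>p\<in>poly_ideal N P. is_max_term (term_less (val_r val N r) Q) p \<gamma>"
proof -
  let ?v = "val_r val N r"
  obtain k :: nat and g u where gu: "\<forall>i<k. g i \<in> P \<and> tate val N r (u i)"
    "f = (\<lambda>\<alpha>. \<Sum>i<k. series_mult (u i) (g i) \<alpha>)"
    using f by (rule tate_idealE)
  define V where "V = ?v (f \<gamma>) \<gamma>"
  define Vg where "Vg = (\<Union>i<k. (\<lambda>\<beta>. ?v (g i \<beta>) \<beta>) ` {\<beta>. g i \<beta> \<noteq> 0})"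
  \<comment> \<open>Truncating at level \<open>M\<close> only discards product terms of valuation above \<open>V\<close>.\<close>
  define M where "M = V - Min (insert 0 Vg)"
  have "finite Vg" unfolding Vg_def using gu(1) P by (auto simp: is_poly_def)
  have bound: "V \<le> M + ?v (g i \<beta>) \<beta>" if "i < k" "g i \<beta> \<noteq> 0" for i \<beta>
  proof -
    have "?v (g i \<beta>) \<beta> \<in> Vg" unfolding Vg_def using that by blast
    then have "Min (insert 0 Vg) \<le> ?v (g i \<beta>) \<beta>" using \<open>finite Vg\<close> by simp
    then show ?thesis unfolding M_def by simp
  qed
  define p where "p = (\<lambda>\<gamma>. \<Sum>i<k. series_mult (truncate ?v M (u i)) (g i) \<gamma>)"
  have "p \<in> poly_ideal N P"
    unfolding p_def using gu(1) by (intro poly_idealI) (simp add: is_poly_truncate)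
  moreover have "is_max_term (term_less ?v Q) p \<gamma>"
  proof (rule is_max_term_perturb[OF max])
    fix \<beta> assume "p \<beta> \<noteq> f \<beta>"
    then have "(\<Sum>i<k. series_mult (truncate ?v M (u i)) (g i) \<beta>) \<noteq> (\<Sum>i<k. series_mult (u i) (g i) \<beta>)"
      by (simp add: p_def gu(2))
    then have "V < ?v ((\<Sum>i<k. series_mult (truncate ?v M (u i)) (g i) \<beta>) -
                      (\<Sum>i<k. series_mult (u i) (g i) \<beta>)) \<beta>"
      using truncate_error_val_r_gt[of k g V M N r u \<beta>] bound by blast
    then show "?v (f \<gamma>) \<gamma> < ?v (p \<beta> - f \<beta>) \<beta>" by (simp add: V_def p_def gu(2))
  qed
  ultimately show ?thesis by blast
qed

end

lemma local_GB_lm_dvd: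
  fixes val :: "'a::field \<Rightarrow> int"
  assumes dvf: "complete_dvf val"
    and F: "\<forall>f\<in>set F. is_poly n f"
    and mo: "monomial_order n mless"
    and H: "\<forall>h\<in>set H. is_poly (Suc n) h \<and> homogeneous (Suc n) h"
    and GB: "is_GB (ord_r0m val n r mless)
               (tate_ideal val (Suc n) (r(n := 0)) (poly_ideal (Suc n) (homog n ` set F))) (set H)"
    and f: "f \<in> tate_ideal val n r (poly_ideal n (set F))" "f \<noteq> zero_series"
  shows "\<exists>g\<in>dehomog n ` set H. g \<noteq> zero_series \<and>
           mono_dvd (lm (ord_rm val n r mless) g) (lm (ord_rm val n r mless) f)"
proof -
  let ?v = "val_r val n r"
  have I: "\<forall>g\<in>poly_ideal n (set F). is_poly n g" using is_poly_poly_ideal[OF F] by blast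
  have "tate val n r f" using tate_of_mem_tate_ideal[OF dvf I f(1)] .
  then have supp: "\<forall>\<alpha>. f \<alpha> \<noteq> 0 \<longrightarrow> \<alpha> \<in> {\<alpha>. monoN n \<alpha>}"
    and fin: "\<forall>c. finite {\<gamma>. f \<gamma> \<noteq> 0 \<and> ?v (f \<gamma>) \<gamma> \<le> c}" unfolding tate_def by auto
  obtain \<gamma> where max: "is_max_term (term_less ?v mless) f \<gamma>"
    using ex_is_max_term[where v = ?v, OF strict_total_on_mless[OF mo] supp f(2) fin] by blast
  have lm: "lm (ord_rm val n r mless) f = \<gamma>"
    unfolding ord_rm_eq_term_less by (rule lm_eq_is_max_term[OF strict_total_on_mless[OF mo] supp max])
  have \<gamma>: "monoN n \<gamma>" using supp max unfolding is_max_term_def by blast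
  obtain p where p: "p \<in> poly_ideal n (poly_ideal n (set F))" "is_max_term (term_less ?v mless) p \<gamma>"
    using ex_poly_ideal_same_max_term[OF dvf I f(1) max] by blast
  have pp: "is_poly n p" by (rule is_poly_poly_ideal[OF I p(1)])
  obtain C where C: "\<forall>\<alpha>. p \<alpha> \<noteq> 0 \<longrightarrow> mdeg n \<alpha> \<le> C"
    "homog_deg n C p \<in> poly_ideal (Suc n) (poly_ideal (Suc n) (homog n ` set F))"
    using ex_homog_deg_mem_poly_ideal[OF F p(1)] by blast
  have "is_max_term (term_less ?v (deg_mless n mless)) (homog_deg n C p) (lift_deg n C \<gamma>)"
    using is_max_term_homog_deg[OF p(2)] C(1) pp unfolding is_poly_def by blast
  moreover have "homog_deg n C p \<in> tate_ideal val (Suc n) (r(n := 0)) (poly_ideal (Suc n) (homog n ` set F))"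
    using C(2) poly_ideal_subset_tate_ideal by blast
  moreover have "\<forall>\<beta>. homog_deg n C p \<beta> \<noteq> 0 \<longrightarrow> monoN (Suc n) \<beta>"
    using homog_deg_nonzeroD(1) by blast
  ultimately obtain h where "h \<in> set H" "dehomog n h \<noteq> zero_series"
    "mono_dvd (lm (ord_rm val n r mless) (dehomog n h)) ((lift_deg n C \<gamma>)(n := 0))"
    using GB_dehomog_lm_dvd[OF mo H GB] by blast
  then show ?thesis using lm lift_deg_fun_upd_0[OF \<gamma>] by auto
qed

theorem mainTheorem6:
  fixes val :: "'a::field \<Rightarrow> int"
    and n :: nat
    and F :: "'a series list"
    and r :: "nat \<Rightarrow> rat"
    and mless :: "mono \<Rightarrow> mono \<Rightarrow> bool"
    and H :: "'a series list"
  assumes "complete_dvf val"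
    and "\<forall>f\<in>set F. is_poly n f"
    and "monomial_order n mless"
    and "\<forall>h\<in>set H. is_poly (Suc n) h \<and> homogeneous (Suc n) h \<and>
                    h \<in> poly_ideal (Suc n) (homog n ` set F)"
    and "is_GB (ord_r0m val n r mless)
           (tate_ideal val (Suc n) (r(n := 0)) (poly_ideal (Suc n) (homog n ` set F))) (set H)"
  shows "is_local_GB val n r mless (poly_ideal n (set F)) (dehomog n ` set H)"
proof -
  have H: "\<forall>h\<in>set H. is_poly (Suc n) h \<and> homogeneous (Suc n) h" using assms(4) by blast
  have in_ideal: "dehomog n ` set H \<subseteq> poly_ideal n (set F)"
    using dehomog_mem_poly_ideal[OF assms(2)] assms(4) by blast
  moreover have "dehomog n ` set H \<subseteq> tate_ideal val n r (poly_ideal n (set F))"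
    using in_ideal assms(4) by (auto intro!: mem_tate_ideal is_poly_dehomog)
  ultimately show ?thesis
    unfolding is_local_GB_def is_GB_def using local_GB_lm_dvd[OF assms(1-3) H assms(5)] by blast
qed

end
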